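(* Let $\sigma$ be an $(\alpha,\beta)$-ReLU activation, and consider the covariance sequence $\{\Sigma^{(L)}\}$ and metrics $\mathrm{FSP}_L(\sigma_w^2)$, $\mathrm{GEV}_L(\sigma_w^2)$ defined in the context. Then: 1. If $\sigma_w^2=2/(\alpha^2+\beta^2)$, then either $\lim_{L\to\infty}\mathrm{GEV}_L(\sigma_w^2)=0$ or $\lim_{L\to\infty}\mathrm{FSP}_L(\sigma_w^2)=0$. 2. If $0<\sigma_w^2<2/(\alpha^2+\beta^2)$, then for every $L\ge1$, $\mathrm{FSP}_L(\sigma_w^2)\le\frac{2C}{(\alpha^2+\beta^2)d_0}\left(\frac{\sigma_w^2(\alpha^2+\beta^2)}{2}\right)^L.$
   Context: An activation $\sigma:\mathbb R\to\mathbb R$ is $(\alpha,\beta)$-ReLU if $\sigma(x)=\alpha x$ for $x\ge0$ and $\sigma(x)=\beta x$ for $x<0$, where $\alpha,\beta\ge0$ are not both $0$. Let $\mathcal G=(\mathcal V,\mathcal E)$ be a finite undirected graph with $n$ nodes, adjacency matrix $A$, degree matrix $D=\mathrm{diag}(A\mathbf 1_n)$ with degrees $d_i$, $\tilde A=A+I$, $\tilde D=D+I$, $\hat A=\tilde D^{-1/2}\tilde A\tilde D^{-1/2}$, $\hat L=I-\hat A$. For $H\in\mathbb R^{n\times C}$ with rows $h_i$, $\mathrm{Dir}(H)=\mathrm{tr}(H^\top\hat LH)=\sum_{\{i,j\}\in\mathcal E}\|h_i/\sqrt{1+d_i}-h_j/\sqrt{1+d_j}\|^2$. Let $X\in\mathbb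 R^{n\times d_0}$ be nonzero, $C\ge1$ an integer, $\sigma_w^2>0$. For positive semidefinite $\Sigma$ put $G(\Sigma)=\mathbb E_{h\sim N(\mathbf 0_n,\Sigma)}[\sigma(h)\sigma(h)^\top]$ (entrywise $\sigma$). Define $\Sigma^{(1)}=\frac{\sigma_w^2}{d_0}\hat AXX^\top\hat A$, $\Sigma^{(l+1)}=\sigma_w^2\hat AG(\Sigma^{(l)})\hat A$. With $H\in\mathbb R^{n\times C}$ having i.i.d. columns $N(\mathbf 0_n,\Sigma^{(L)})$: $\mathrm{FSP}_L(\sigma_w^2)=\mathbb E[\|H\|_F^2/\|X\|_F^2]$, $\mathrm{GEV}_L(\sigma_w^2)=\mathbb E[\mathrm{Dir}(H)/\|H\|_F^2]$. *)

theory Defs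
  imports "HOL-Probability.Probability"
begin

definition relu_ab :: "real \<Rightarrow> real \<Rightarrow> real \<Rightarrow> real" where
  "relu_ab \<alpha> \<beta> x = (if x \<ge> 0 then \<alpha> * x else \<beta> * x)"

definition is_adj :: "('n::finite \<Rightarrow> 'n \<Rightarrow> real) \<Rightarrow> bool" where
  "is_adj A \<longleftrightarrow> (\<forall>i j. A i j \<in> {0, 1} \<and> A i j = A j i) \<and> (\<forall>i. A i i = 0)"

definition degree :: "('n::finite \<Rightarrow> 'n \<Rightarrow> real) \<Rightarrow> 'n \<Rightarrow> real" where
  "degree A i = (\<Sum>j\<in>UNIV. A i j)"

text \<open>hat A = tilde D^(-1/2) (A + I) tilde D^(-1/2).\<close>
definition A_hat :: "('n::finite \<Rightarrow> 'n \<Rightarrow> real) \<Rightarrow> 'n \<Rightarrow> 'n \<Rightarrow> real" where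
  "A_hat A i j = (A i j + (if i = j then 1 else 0)) /
                 (sqrt (1 + degree A i) * sqrt (1 + degree A j))"

definition L_hat :: "('n::finite \<Rightarrow> 'n \<Rightarrow> real) \<Rightarrow> 'n \<Rightarrow> 'n \<Rightarrow> real" where
  "L_hat A i j = (if i = j then 1 else 0) - A_hat A i j"

definition mmul :: "('a \<Rightarrow> 'b::finite \<Rightarrow> real) \<Rightarrow> ('b \<Rightarrow> 'c \<Rightarrow> real) \<Rightarrow> 'a \<Rightarrow> 'c \<Rightarrow> real" where
  "mmul M N i j = (\<Sum>k\<in>UNIV. M i k * N k j)"

definition mtrans :: "('a \<Rightarrow> 'b \<Rightarrow> real) \<Rightarrow> 'b \<Rightarrow> 'a \<Rightarrow> real" where
  "mtrans M i j = M j i"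

text \<open>Dirichlet energy Dir(H) = tr(H^T hat L H); H has rows indexed by nodes and
  columns indexed by channels c < C.\<close>
definition dirichlet :: "('n::finite \<Rightarrow> 'n \<Rightarrow> real) \<Rightarrow> nat \<Rightarrow> (nat \<Rightarrow> 'n \<Rightarrow> real) \<Rightarrow> real" where
  "dirichlet A C H = (\<Sum>c<C. \<Sum>i\<in>UNIV. \<Sum>j\<in>UNIV. H c i * L_hat A i j * H c j)"

definition frob2 :: "nat \<Rightarrow> (nat \<Rightarrow> 'n::finite \<Rightarrow> real) \<Rightarrow> real" where
  "frob2 C H = (\<Sum>c<C. \<Sum>i\<in>UNIV. (H c i)\<^sup>2)"

definition frob2X :: "('n::finite \<Rightarrow> 'd::finite \<Rightarrow> real) \<Rightarrow> real" where
  "frob2X X = (\<Sum>i\<in>UNIV. \<Sum>k\<in>UNIV. (X i k)\<^sup>2)"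

text \<open>Standard normal distribution on the reals and the centered multivariate
  normal N(0, Sigma) on 'n => real (Sigma positive semidefinite), realised as the
  law of M z with z standard normal i.i.d. and M M^T = Sigma.\<close>
definition std_normal :: "real measure" where
  "std_normal = density lborel std_normal_density"

definition sqrt_factor :: "('n::finite \<Rightarrow> 'n \<Rightarrow> real) \<Rightarrow> 'n \<Rightarrow> 'n \<Rightarrow> real" where
  "sqrt_factor S = (SOME M. mmul M (mtrans M) = S)"

definition mvnormal :: "('n::finite \<Rightarrow> 'n \<Rightarrow> real) \<Rightarrow> ('n \<Rightarrow> real) measure" where
  "mvnormal S = distr (PiM UNIV (\<lambda>_. std_normal)) (PiM UNIV (\<lambda>_. borel))
                  (\<lambda>z i. \<Sum>k\<in>UNIV. sqrt_factor S i k * z k)"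

definition Gmat :: "(real \<Rightarrow> real) \<Rightarrow> ('n::finite \<Rightarrow> 'n \<Rightarrow> real) \<Rightarrow> 'n \<Rightarrow> 'n \<Rightarrow> real" where
  "Gmat \<sigma> S i j = (\<integral>h. \<sigma> (h i) * \<sigma> (h j) \<partial>mvnormal S)"

text \<open>Covariance sequence: Sigma^(1), Sigma^(l+1); index 0 is unused (zero).\<close>
fun cov :: "(real \<Rightarrow> real) \<Rightarrow> real \<Rightarrow> ('n::finite \<Rightarrow> 'n \<Rightarrow> real) \<Rightarrow> ('n \<Rightarrow> 'd::finite \<Rightarrow> real)
            \<Rightarrow> nat \<Rightarrow> 'n \<Rightarrow> 'n \<Rightarrow> real" where
  "cov \<sigma> sw A X 0 = (\<lambda>i j. 0)"
| "cov \<sigma> sw A X (Suc 0) =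
     (\<lambda>i j. sw / real CARD('d) * mmul (mmul (A_hat A) (mmul X (mtrans X))) (A_hat A) i j)"
| "cov \<sigma> sw A X (Suc (Suc l)) =
     (\<lambda>i j. sw * mmul (mmul (A_hat A) (Gmat \<sigma> (cov \<sigma> sw A X (Suc l)))) (A_hat A) i j)"

definition Hlaw :: "nat \<Rightarrow> ('n::finite \<Rightarrow> 'n \<Rightarrow> real) \<Rightarrow> (nat \<Rightarrow> 'n \<Rightarrow> real) measure" where
  "Hlaw C S = PiM {..<C} (\<lambda>_. mvnormal S)"

definition FSP :: "(real \<Rightarrow> real) \<Rightarrow> nat \<Rightarrow> ('n::finite \<Rightarrow> 'n \<Rightarrow> real) \<Rightarrow> ('n \<Rightarrow> 'd::finite \<Rightarrow> real)
                    \<Rightarrow> nat \<Rightarrow> real \<Rightarrow> real" where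
  "FSP \<sigma> C A X L sw = (\<integral>H. frob2 C H / frob2X X \<partial>Hlaw C (cov \<sigma> sw A X L))"

definition GEV :: "(real \<Rightarrow> real) \<Rightarrow> nat \<Rightarrow> ('n::finite \<Rightarrow> 'n \<Rightarrow> real) \<Rightarrow> ('n \<Rightarrow> 'd::finite \<Rightarrow> real)
                    \<Rightarrow> nat \<Rightarrow> real \<Rightarrow> real" where
  "GEV \<sigma> C A X L sw = (\<integral>H. dirichlet A C H / frob2 C H \<partial>Hlaw C (cov \<sigma> sw A X L))"

end

theory Submission
  imports Defs
begin

text \<open>Let \<open>t\<^sub>L\<close> be the trace of the covariance \<open>\<Sigma>\<^sub>L\<close> of layer \<open>L\<close>, so that
  \<open>FSP\<^sub>L = C t\<^sub>L / \<parallel>X\<parallel>\<^sup>2\<close>.  For a centred Gaussian \<open>h\<close> one has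
  \<open>E \<sigma>(h\<^sub>i)\<^sup>2 = (\<alpha>\<^sup>2 + \<beta>\<^sup>2)/2 \<cdot> \<Sigma>\<^sub>i\<^sub>i\<close>, and \<open>A_hat\<close> is a contraction, hence
  \<open>t\<^sub>L\<^sub>+\<^sub>1 \<le> \<sigma>\<^sub>w\<^sup>2 (\<alpha>\<^sup>2 + \<beta>\<^sup>2)/2 \<cdot> t\<^sub>L\<close>; this gives the geometric bound.
  At the critical variance \<open>t\<^sub>L\<close> decreases to some \<open>\<tau>\<close>, and if \<open>\<tau> = 0\<close> the FSP vanishes.
  Otherwise, as the spectrum of \<open>A_hat\<close> lies in \<open>[\<delta> - 1, 1]\<close> for some \<open>\<delta> > 0\<close>, the expected
  Dirichlet energy of layer \<open>L + 1\<close> is at most a constant times \<open>t\<^sub>L - t\<^sub>L\<^sub>+\<^sub>1\<close>, which tends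
  to zero, while some diagonal entry of \<open>\<Sigma>\<^sub>L\<close> stays \<open>\<ge> \<tau>/n\<close>, so that by Gaussian
  anti-concentration \<open>\<parallel>H\<parallel>\<^sup>2\<close> is rarely small.  Splitting \<open>E[Dir(H)/\<parallel>H\<parallel>\<^sup>2]\<close> on the event
  \<open>\<parallel>H\<parallel>\<^sup>2 < \<epsilon>\<close> then shows that the GEV tends to zero.\<close>

section \<open>Vectors and the normalised adjacency matrix\<close>

definition dot :: "('n::finite \<Rightarrow> real) \<Rightarrow> ('n \<Rightarrow> real) \<Rightarrow> real" where
  "dot u w = (\<Sum>i\<in>UNIV. u i * w i)"

definition mulv :: "('m \<Rightarrow> 'n::finite \<Rightarrow> real) \<Rightarrow> ('n \<Rightarrow> real) \<Rightarrow> 'm \<Rightarrow> real" where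
  "mulv M v = (\<lambda>i. \<Sum>j\<in>UNIV. M i j * v j)"

lemma dot_commute: "dot u w = dot w u"
  by (simp add: dot_def mult.commute)

lemma dot_diff_left: "dot (\<lambda>i. u i - w i) x = dot u x - dot w x"
  by (simp add: dot_def algebra_simps sum_subtractf)

lemma dot_diff_right: "dot x (\<lambda>i. u i - w i) = dot x u - dot x w"
  by (simp add: dot_def algebra_simps sum_subtractf)

lemma dot_scale_left: "dot (\<lambda>i. c * u i) x = c * dot u x"
  by (simp add: dot_def algebra_simps sum_distrib_left)

lemma dot_self_nonneg: "0 \<le> dot u u"
  by (simp add: dot_def sum_nonneg)

lemma mulv_diff: "mulv M (\<lambda>i. u i - w i) = (\<lambda>i. mulv M u i - mulv M w i)"
  by (simp add: mulv_def algebra_simps sum_subtractf)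

lemma mulv_scale: "mulv M (\<lambda>i. c * u i) = (\<lambda>i. c * mulv M u i)"
  by (simp add: mulv_def algebra_simps sum_distrib_left)

lemma dot_mulv_eq_double_sum: "dot u (mulv M w) = (\<Sum>i\<in>UNIV. \<Sum>j\<in>UNIV. u i * M i j * w j)"
  by (simp add: dot_def mulv_def sum_distrib_left mult.assoc)

lemma dot_mulv_sym:
  assumes "\<And>i j. M i j = M j i"
  shows "dot u (mulv M w) = dot (mulv M u) w"
proof -
  have "dot u (mulv M w) = (\<Sum>j\<in>UNIV. \<Sum>i\<in>UNIV. u i * M i j * w j)"
    unfolding dot_mulv_eq_double_sum by (rule sum.swap)
  also have "\<dots> = (\<Sum>j\<in>UNIV. \<Sum>i\<in>UNIV. M j i * u i * w j)"
    by (simp add: assms[of _ j for j] mult_ac)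
  also have "\<dots> = dot (mulv M u) w"
    by (simp add: dot_def mulv_def sum_distrib_right)
  finally show ?thesis .
qed

lemma sum_delta_mult:
  fixes f :: "'n::finite \<Rightarrow> real"
  shows "(\<Sum>j\<in>UNIV. (if i = j then 1 else 0) * f j) = f i"
proof -
  have "(\<Sum>j\<in>UNIV. (if i = j then 1 else 0) * f j) = (\<Sum>j\<in>UNIV. if i = j then f j else 0)"
    by (rule sum.cong) auto
  then show ?thesis by simp
qed

lemma mulv_L_hat: "mulv (L_hat A) v = (\<lambda>i. v i - mulv (A_hat A) v i)"
  by (simp add: mulv_def L_hat_def left_diff_distrib sum_subtractf sum_delta_mult)

definition adj_loops :: "('n::finite \<Rightarrow> 'n \<Rightarrow> real) \<Rightarrow> 'n \<Rightarrow> 'n \<Rightarrow> real" where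
  "adj_loops A i j = A i j + (if i = j then 1 else 0)"

definition deg_loops :: "('n::finite \<Rightarrow> 'n \<Rightarrow> real) \<Rightarrow> 'n \<Rightarrow> real" where
  "deg_loops A i = 1 + degree A i"

text \<open>The spectrum of \<open>A_hat A\<close> lies in \<open>[hat_margin A - 1, 1]\<close>; \<open>smoothing_const A\<close> is
  the constant of the inequality \<open>\<lambda>\<^sup>2 (1 - \<lambda>) \<le> c (1 - \<lambda>\<^sup>2)\<close> on that interval.\<close>
definition hat_margin :: "('n::finite \<Rightarrow> 'n \<Rightarrow> real) \<Rightarrow> real" where
  "hat_margin A = 2 / (\<Sum>i\<in>UNIV. deg_loops A i)"

definition smoothing_const :: "('n::finite \<Rightarrow> 'n \<Rightarrow> real) \<Rightarrow> real" where
  "smoothing_const A = hat_margin A + 1 / hat_margin A + 1 / 2"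

lemma sum_adj_loops: "(\<Sum>j\<in>UNIV. adj_loops A i j) = deg_loops A i"
  by (simp add: adj_loops_def deg_loops_def degree_def sum.distrib)

lemma A_hat_eq: "A_hat A i j = adj_loops A i j / (sqrt (deg_loops A i) * sqrt (deg_loops A j))"
  by (simp add: A_hat_def adj_loops_def deg_loops_def)

context
  fixes A :: "'n::finite \<Rightarrow> 'n \<Rightarrow> real"
  assumes adj: "is_adj A"
begin

lemma adj_nonneg: "0 \<le> A i j"
  using adj unfolding is_adj_def by (metis empty_iff insert_iff order_refl zero_le_one)

lemma adj_sym: "A i j = A j i"
  using adj unfolding is_adj_def by blast

lemma adj_loops_nonneg: "0 \<le> adj_loops A i j"
  by (simp add: adj_loops_def adj_nonneg)

lemma adj_loops_sym: "adj_loops A i j = adj_loops A j i"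
  by (simp add: adj_loops_def adj_sym)

lemma adj_loops_diag: "adj_loops A i i = 1"
  using adj unfolding is_adj_def adj_loops_def by simp

lemma deg_loops_ge_1: "1 \<le> deg_loops A i"
  unfolding deg_loops_def degree_def by (simp add: sum_nonneg adj_nonneg)

lemma deg_loops_pos: "0 < deg_loops A i"
  using deg_loops_ge_1[of i] by simp

lemma A_hat_sym: "A_hat A i j = A_hat A j i"
  by (simp add: A_hat_eq adj_loops_sym mult.commute)

lemma L_hat_sym: "L_hat A i j = L_hat A j i"
  by (simp add: L_hat_def A_hat_sym)

lemma hat_margin_pos: "0 < hat_margin A"
  unfolding hat_margin_def by (simp add: sum_pos deg_loops_pos)

lemma deg_loops_le_sum: "deg_loops A i \<le> (\<Sum>j\<in>UNIV. deg_loops A j)"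
  by (rule member_le_sum) (auto intro: less_imp_le deg_loops_pos)

text \<open>In the coordinates \<open>u i = v i / sqrt (deg_loops A i)\<close> both \<open>dot v v\<close> and
  \<open>dot v (mulv (A_hat A) v)\<close> become sums over the edges (and loops) of the graph.\<close>
lemma dot_self_eq_deg_loops:
  "dot v v = (\<Sum>i\<in>UNIV. deg_loops A i * (v i / sqrt (deg_loops A i))\<^sup>2)"
  using deg_loops_pos[THEN order_less_imp_not_eq2] deg_loops_pos
  by (simp add: dot_def power2_eq_square less_imp_le)

lemma sum_adj_loops_sq:
  fixes v :: "'n \<Rightarrow> real" and s :: real
  defines "u \<equiv> \<lambda>i. v i / sqrt (deg_loops A i)"
  shows "(\<Sum>i\<in>UNIV. \<Sum>j\<in>UNIV. adj_loops A i j * (u i + s * u j)\<^sup>2)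
       = (1 + s\<^sup>2) * dot v v + 2 * s * dot v (mulv (A_hat A) v)"
proof -
  have v_eq: "v i = sqrt (deg_loops A i) * u i" for i
    using deg_loops_pos[of i] by (simp add: u_def)
  have sq: "(\<Sum>i\<in>UNIV. \<Sum>j\<in>UNIV. adj_loops A i j * (u i)\<^sup>2) = dot v v"
    by (simp add: dot_self_eq_deg_loops sum_distrib_right[symmetric] sum_adj_loops u_def)
  have sq': "(\<Sum>i\<in>UNIV. \<Sum>j\<in>UNIV. adj_loops A i j * (u j)\<^sup>2) = dot v v"
    using sq by (subst sum.swap) (simp add: adj_loops_sym)
  have cross: "(\<Sum>i\<in>UNIV. \<Sum>j\<in>UNIV. adj_loops A i j * u i * u j) = dot v (mulv (A_hat A) v)"
    unfolding dot_mulv_eq_double_sum A_hat_eq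
    using deg_loops_pos[THEN less_imp_neq] by (intro sum.cong refl) (simp add: v_eq less_imp_le)
  have "(\<Sum>i\<in>UNIV. \<Sum>j\<in>UNIV. adj_loops A i j * (u i + s * u j)\<^sup>2)
      = (\<Sum>i\<in>UNIV. \<Sum>j\<in>UNIV. adj_loops A i j * (u i)\<^sup>2)
        + 2 * s * (\<Sum>i\<in>UNIV. \<Sum>j\<in>UNIV. adj_loops A i j * u i * u j)
        + s\<^sup>2 * (\<Sum>i\<in>UNIV. \<Sum>j\<in>UNIV. adj_loops A i j * (u j)\<^sup>2)"
    by (simp add: power2_eq_square algebra_simps sum.distrib sum_distrib_left)
  then show ?thesis unfolding sq sq' cross by (simp add: algebra_simps)
qed

lemma dot_A_hat_le: "dot v (mulv (A_hat A) v) \<le> dot v v"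
proof -
  define u where "u i = v i / sqrt (deg_loops A i)" for i
  have "0 \<le> (\<Sum>i\<in>UNIV. \<Sum>j\<in>UNIV. adj_loops A i j * (u i + - 1 * u j)\<^sup>2)"
    by (intro sum_nonneg mult_nonneg_nonneg adj_loops_nonneg zero_le_power2)
  then show ?thesis
    using sum_adj_loops_sq[of v "- 1"] by (simp add: u_def)
qed

lemma dot_A_hat_ge: "(hat_margin A - 1) * dot v v \<le> dot v (mulv (A_hat A) v)"
proof -
  define u where "u i = v i / sqrt (deg_loops A i)" for i
  define T where "T = (\<Sum>i\<in>UNIV. deg_loops A i)"
  have T_pos: "0 < T"
    unfolding T_def by (simp add: sum_pos deg_loops_pos)
  have "4 * (\<Sum>i\<in>UNIV. (u i)\<^sup>2) = (\<Sum>i\<in>UNIV. adj_loops A i i * (u i + 1 * u i)\<^sup>2)"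
    by (simp add: adj_loops_diag power2_eq_square sum_distrib_left)
  also have "\<dots> \<le> (\<Sum>i\<in>UNIV. \<Sum>j\<in>UNIV. adj_loops A i j * (u i + 1 * u j)\<^sup>2)"
    by (intro sum_mono member_le_sum) (auto intro: mult_nonneg_nonneg adj_loops_nonneg)
  also have "\<dots> = 2 * dot v v + 2 * dot v (mulv (A_hat A) v)"
    using sum_adj_loops_sq[of v 1] by (simp add: u_def)
  finally have edges: "2 * (\<Sum>i\<in>UNIV. (u i)\<^sup>2) \<le> dot v v + dot v (mulv (A_hat A) v)"
    by simp
  have "dot v v \<le> (\<Sum>i\<in>UNIV. T * (u i)\<^sup>2)"
    unfolding dot_self_eq_deg_loops u_def T_def
    by (intro sum_mono mult_right_mono deg_loops_le_sum) simp
  then have "hat_margin A * dot v v \<le> 2 * (\<Sum>i\<in>UNIV. (u i)\<^sup>2)"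
    using T_pos by (simp add: hat_margin_def T_def[symmetric] sum_distrib_left[symmetric] field_simps)
  with edges show ?thesis by (simp add: algebra_simps)
qed

lemma norm_A_hat_le: "dot (mulv (A_hat A) v) (mulv (A_hat A) v) \<le> dot v v"
proof -
  define u where "u i = v i / sqrt (deg_loops A i)" for i
  have "mulv (A_hat A) v i = (\<Sum>j\<in>UNIV. adj_loops A i j * u j) / sqrt (deg_loops A i)" for i
    by (simp add: mulv_def A_hat_eq u_def sum_divide_distrib mult_ac)
  then have "dot (mulv (A_hat A) v) (mulv (A_hat A) v)
      = (\<Sum>i\<in>UNIV. (\<Sum>j\<in>UNIV. adj_loops A i j * u j)\<^sup>2 / deg_loops A i)"
    using deg_loops_pos by (simp add: dot_def power_divide[symmetric] power2_eq_square less_imp_le)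
  also have "\<dots> \<le> (\<Sum>i\<in>UNIV. \<Sum>j\<in>UNIV. adj_loops A i j * (u j)\<^sup>2)"
  proof (rule sum_mono)
    fix i
    have "(\<Sum>j\<in>UNIV. adj_loops A i j * u j)\<^sup>2
        = (\<Sum>j\<in>UNIV. sqrt (adj_loops A i j) * (sqrt (adj_loops A i j) * u j))\<^sup>2"
      using adj_loops_nonneg by (simp add: mult.assoc[symmetric])
    also have "\<dots> \<le> (\<Sum>j\<in>UNIV. (sqrt (adj_loops A i j))\<^sup>2) * (\<Sum>j\<in>UNIV. (sqrt (adj_loops A i j) * u j)\<^sup>2)"
      by (rule Cauchy_Schwarz_ineq_sum)
    also have "\<dots> = deg_loops A i * (\<Sum>j\<in>UNIV. adj_loops A i j * (u j)\<^sup>2)"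
      using adj_loops_nonneg by (simp add: sum_adj_loops power_mult_distrib)
    finally show "(\<Sum>j\<in>UNIV. adj_loops A i j * u j)\<^sup>2 / deg_loops A i
        \<le> (\<Sum>j\<in>UNIV. adj_loops A i j * (u j)\<^sup>2)"
      using deg_loops_pos[of i] by (simp add: divide_le_eq mult.commute)
  qed
  also have "\<dots> = dot v v"
    using sum_adj_loops_sq[of v 0] by (subst sum.swap) (simp add: adj_loops_sym u_def)
  finally show ?thesis .
qed

lemma dot_L_hat_nonneg: "0 \<le> dot v (mulv (L_hat A) v)"
  using dot_A_hat_le[of v] by (simp add: mulv_L_hat dot_diff_right)

lemma dot_L_hat_le: "dot v (mulv (L_hat A) v) \<le> (2 - hat_margin A) * dot v v"
  using dot_A_hat_ge[of v] by (simp add: mulv_L_hat dot_diff_right algebra_simps)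

lemma dot_L_hat_sym: "dot u (mulv (L_hat A) w) = dot (mulv (L_hat A) u) w"
  using L_hat_sym by (rule dot_mulv_sym)

text \<open>Writing \<open>p\<close> for \<open>mulv (L_hat A)\<close>, both sides are combinations of \<open>a1 = \<langle>s, p s\<rangle>\<close>,
  \<open>a2 = \<langle>p s, p s\<rangle>\<close> and \<open>a3 = \<langle>p s, p (p s)\<rangle>\<close>, and the difference is a nonnegative combination of
  \<open>a1 \<ge> 0\<close>, \<open>a3 \<le> (2 - hat_margin A) a2\<close> and \<open>\<langle>p s - 2 s, p (p s - 2 s)\<rangle> \<ge> 0\<close>.\<close>
lemma dirichlet_A_hat_le:
  "dot (mulv (A_hat A) s) (mulv (L_hat A) (mulv (A_hat A) s))
     \<le> smoothing_const A * (dot s s - dot (mulv (A_hat A) s) (mulv (A_hat A) s))"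
proof -
  define p1 where "p1 = mulv (L_hat A) s"
  define p2 where "p2 = mulv (L_hat A) p1"
  define a1 where "a1 = dot s p1"
  define a2 where "a2 = dot p1 p1"
  define a3 where "a3 = dot p1 p2"
  define \<delta> where "\<delta> = hat_margin A"
  have \<delta>_pos: "0 < \<delta>" unfolding \<delta>_def by (rule hat_margin_pos)
  have As: "mulv (A_hat A) s = (\<lambda>i. s i - p1 i)"
    by (simp add: p1_def mulv_L_hat)
  have sp2: "dot s p2 = a2"
    unfolding p2_def a2_def p1_def by (rule dot_L_hat_sym)
  have lhs: "dot (mulv (A_hat A) s) (mulv (L_hat A) (mulv (A_hat A) s)) = a1 - 2 * a2 + a3"
    unfolding As mulv_diff p2_def[symmetric] p1_def[symmetric] using sp2
    by (simp add: dot_diff_left dot_diff_right a1_def a2_def a3_def dot_commute[of p1 s] p2_def)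
  have rhs: "dot s s - dot (mulv (A_hat A) s) (mulv (A_hat A) s) = 2 * a1 - a2"
    unfolding As by (simp add: dot_diff_left dot_diff_right a1_def a2_def dot_commute[of p1 s])
  have a1: "0 \<le> a1"
    unfolding a1_def p1_def by (rule dot_L_hat_nonneg)
  have a3: "a3 \<le> (2 - \<delta>) * a2"
    unfolding a3_def a2_def p2_def \<delta>_def by (rule dot_L_hat_le)
  have "0 \<le> dot (\<lambda>i. p1 i - 2 * s i) (mulv (L_hat A) (\<lambda>i. p1 i - 2 * s i))"
    by (rule dot_L_hat_nonneg)
  also have "\<dots> = a3 - 4 * a2 + 4 * a1"
    using sp2 unfolding mulv_diff mulv_scale p2_def[symmetric] p1_def[symmetric]
    by (simp add: dot_diff_left dot_diff_right dot_scale_left dot_commute[of _ "\<lambda>i. 2 * _ i"]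
        dot_scale_left a1_def a2_def a3_def dot_commute[of p1 s] p2_def)
  finally have a123: "0 \<le> a3 - 4 * a2 + 4 * a1" .
  have "smoothing_const A * (2 * a1 - a2) - (a1 - 2 * a2 + a3)
      = (1 + 1 / (2 * \<delta>)) * ((2 - \<delta>) * a2 - a3) + 1 / (2 * \<delta>) * (a3 - 4 * a2 + 4 * a1) + 2 * \<delta> * a1"
    unfolding smoothing_const_def \<delta>_def[symmetric] using \<delta>_pos by (simp add: field_simps)
  also have "\<dots> \<ge> 0"
  proof -
    have "0 \<le> (1 + 1 / (2 * \<delta>)) * ((2 - \<delta>) * a2 - a3)"
      using a3 \<delta>_pos by simp
    moreover have "0 \<le> 1 / (2 * \<delta>) * (a3 - 4 * a2 + 4 * a1)"
      using a123 \<delta>_pos by simp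
    moreover have "0 \<le> 2 * \<delta> * a1"
      using a1 \<delta>_pos by simp
    ultimately show ?thesis by linarith
  qed
  finally show ?thesis unfolding lhs rhs by simp
qed

end

section \<open>Positive semidefinite matrices and their factorisation\<close>

definition quad_form_on :: "'n set \<Rightarrow> ('n \<Rightarrow> 'n \<Rightarrow> real) \<Rightarrow> ('n \<Rightarrow> real) \<Rightarrow> real" where
  "quad_form_on F S v = (\<Sum>i\<in>F. \<Sum>j\<in>F. v i * S i j * v j)"

definition psd :: "('n::finite \<Rightarrow> 'n \<Rightarrow> real) \<Rightarrow> bool" where
  "psd S \<longleftrightarrow> (\<forall>i j. S i j = S j i) \<and> (\<forall>v. 0 \<le> quad_form_on UNIV S v)"

lemma quad_form_on_cong: "(\<And>i. i \<in> F \<Longrightarrow> v i = w i) \<Longrightarrow> quad_form_on F S v = quad_form_on F S w"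
  by (simp add: quad_form_on_def)

lemma quad_form_on_insert:
  assumes "finite F" "a \<notin> F" "\<And>i j. S i j = S j i"
  shows "quad_form_on (insert a F) S v
       = (v a)\<^sup>2 * S a a + 2 * v a * (\<Sum>k\<in>F. S a k * v k) + quad_form_on F S v"
proof -
  have "quad_form_on (insert a F) S v = v a * S a a * v a + (\<Sum>k\<in>F. v a * S a k * v k)
      + (\<Sum>i\<in>F. v i * S i a * v a) + quad_form_on F S v"
    using assms by (simp add: quad_form_on_def sum.distrib algebra_simps)
  also have "(\<Sum>i\<in>F. v i * S i a * v a) = (\<Sum>k\<in>F. v a * S a k * v k)"
    by (rule sum.cong[OF refl]) (simp add: assms(3)[of _ a] mult_ac)
  finally show ?thesis
    by (simp add: power2_eq_square sum_distrib_left mult_ac)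
qed

context
  fixes S :: "'n \<Rightarrow> 'n \<Rightarrow> real" and a :: 'n and F :: "'n set"
  assumes finite: "finite F" and notin: "a \<notin> F" and sym: "\<And>i j. S i j = S j i"
begin

lemma quad_form_on_insert_upd:
  "quad_form_on (insert a F) S (w(a := t))
     = t\<^sup>2 * S a a + 2 * t * (\<Sum>k\<in>F. S a k * w k) + quad_form_on F S w"
proof -
  have "(\<Sum>k\<in>F. S a k * (w(a := t)) k) = (\<Sum>k\<in>F. S a k * w k)"
    using notin by (intro sum.cong) auto
  moreover have "quad_form_on F S (w(a := t)) = quad_form_on F S w"
    using notin by (intro quad_form_on_cong) auto
  ultimately show ?thesis
    by (simp add: quad_form_on_insert[OF finite notin sym])
qed

context
  assumes psd_on: "\<And>v. 0 \<le> quad_form_on (insert a F) S v"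
begin

lemma psd_on_restrict: "0 \<le> quad_form_on F S w"
  using psd_on[of "w(a := 0)"] by (simp add: quad_form_on_insert_upd)

lemma psd_on_insert_diag_nonneg: "0 \<le> S a a"
  using psd_on[of "(\<lambda>_. 0)(a := 1)", unfolded quad_form_on_insert_upd] by (simp add: quad_form_on_def)

lemma psd_on_insert_zero_row:
  assumes "S a a = 0" and "j \<in> F"
  shows "S a j = 0"
proof (rule ccontr)
  assume ne: "S a j \<noteq> 0"
  define w :: "'n \<Rightarrow> real" where "w k = (if k = j then 1 else 0)" for k
  have "(\<Sum>k\<in>F. S a k * w k) = S a j"
    using finite \<open>j \<in> F\<close> by (simp add: w_def if_distrib[of "\<lambda>x. _ * x"] cong: if_cong)
  then have "0 \<le> 2 * t * S a j + quad_form_on F S w" for t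
    using psd_on[of "w(a := t)"] by (simp add: quad_form_on_insert_upd assms(1))
  from this[of "- (quad_form_on F S w + 1) / (2 * S a j)"] ne show False
    by (simp add: field_simps)
qed

text \<open>If \<open>S a a = 0\<close>, division by zero makes the Schur complement equal to \<open>S\<close>.\<close>
lemma psd_on_schur_complement:
  "0 \<le> quad_form_on F (\<lambda>i j. S i j - S i a * S a j / S a a) v"
proof (cases "S a a = 0")
  case True
  then show ?thesis using psd_on_restrict by simp
next
  case False
  then have pos: "0 < S a a" using psd_on_insert_diag_nonneg by simp
  define b where "b = (\<Sum>k\<in>F. S a k * v k)"
  have b_sym: "(\<Sum>i\<in>F. v i * S i a) = b"
    unfolding b_def by (intro sum.cong refl) (simp add: sym[of _ a] mult.commute)
  have "quad_form_on F (\<lambda>i j. S i j - S i a * S a j / S a a) v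
      = quad_form_on F S v - (\<Sum>i\<in>F. \<Sum>j\<in>F. (v i * S i a) * (S a j * v j)) / S a a"
    unfolding quad_form_on_def
    by (simp add: right_diff_distrib left_diff_distrib sum_subtractf sum_divide_distrib mult_ac)
  also have "(\<Sum>i\<in>F. \<Sum>j\<in>F. (v i * S i a) * (S a j * v j)) = b\<^sup>2"
    unfolding power2_eq_square sum_product[symmetric] b_sym b_def ..
  also have "quad_form_on F S v - b\<^sup>2 / S a a = quad_form_on (insert a F) S (v(a := - b / S a a))"
    unfolding quad_form_on_insert_upd b_def[symmetric] using pos by (simp add: power2_eq_square field_simps)
  finally show ?thesis using psd_on by simp
qed

text \<open>One Cholesky step: the new column is \<open>S i a / sqrt (S a a)\<close>, which vanishes together with
  row \<open>a\<close> of \<open>S\<close> when \<open>S a a = 0\<close>.\<close>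
lemma psd_on_insert_factor:
  assumes M': "\<And>i j. i \<in> F \<Longrightarrow> j \<in> F \<Longrightarrow> (\<Sum>k\<in>F. M' i k * M' j k) = S i j - S i a * S a j / S a a"
  shows "\<exists>M. \<forall>i\<in>insert a F. \<forall>j\<in>insert a F. (\<Sum>k\<in>insert a F. M i k * M j k) = S i j"
proof (intro exI ballI)
  define M where "M i k = (if k = a then S i a / sqrt (S a a) else if i = a then 0 else M' i k)" for i k
  fix i j
  assume ij: "i \<in> insert a F" "j \<in> insert a F"
  have "(\<Sum>k\<in>insert a F. M i k * M j k)
      = S i a * S j a / S a a + (if i = a \<or> j = a then 0 else (\<Sum>k\<in>F. M' i k * M' j k))"
    using finite notin psd_on_insert_diag_nonneg by (auto simp: M_def intro!: sum.cong sum.neutral)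
  also have "\<dots> = S i j"
  proof -
    consider "i = a" "j = a" | "i = a" "j \<in> F" "j \<noteq> a" | "i \<in> F" "i \<noteq> a" "j = a"
      | "i \<in> F" "j \<in> F" "i \<noteq> a" "j \<noteq> a"
      using ij by blast
    then show ?thesis
    proof cases
      case 2
      then show ?thesis
        using psd_on_insert_zero_row[of j] sym[of j a] by (cases "S a a = 0") auto
    next
      case 3
      then show ?thesis
        using psd_on_insert_zero_row[of i] sym[of i a] by (cases "S a a = 0") auto
    next
      case 4
      then show ?thesis
        using M' sym[of j a] by simp
    qed (simp add: power2_eq_square)
  qed
  finally show "(\<Sum>k\<in>insert a F. M i k * M j k) = S i j" .
qed

end

end

lemma psd_on_factor:
  assumes "finite F" and "\<And>i j. S i j = S j i" and "\<And>v. 0 \<le> quad_form_on F S v"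
  shows "\<exists>M. \<forall>i\<in>F. \<forall>j\<in>F. (\<Sum>k\<in>F. M i k * M j k) = S i j"
  using assms
proof (induction F arbitrary: S rule: finite_induct)
  case empty
  then show ?case by simp
next
  case (insert a F)
  have "\<exists>M'. \<forall>i\<in>F. \<forall>j\<in>F. (\<Sum>k\<in>F. M' i k * M' j k) = S i j - S i a * S a j / S a a"
    using insert.prems psd_on_schur_complement[OF insert.hyps(1,2)]
    by (intro insert.IH) (auto simp: mult.commute)
  then obtain M' where "\<And>i j. i \<in> F \<Longrightarrow> j \<in> F \<Longrightarrow> (\<Sum>k\<in>F. M' i k * M' j k) = S i j - S i a * S a j / S a a"
    by blast
  then show ?case
    by (rule psd_on_insert_factor[OF insert.hyps(1,2) insert.prems])
qed

lemma sqrt_factor_psd: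
  fixes S :: "'n::finite \<Rightarrow> 'n \<Rightarrow> real"
  assumes "psd S"
  shows "(\<Sum>k\<in>UNIV. sqrt_factor S i k * sqrt_factor S j k) = S i j"
proof -
  obtain M :: "'n \<Rightarrow> 'n \<Rightarrow> real" where "\<forall>i j. (\<Sum>k\<in>UNIV. M i k * M j k) = S i j"
    using psd_on_factor[of UNIV S] assms unfolding psd_def by auto
  then have "\<exists>M::'n \<Rightarrow> 'n \<Rightarrow> real. mmul M (mtrans M) = S"
    by (intro exI[of _ M] ext) (simp add: mmul_def mtrans_def)
  then have "mmul (sqrt_factor S) (mtrans (sqrt_factor S)) = S"
    unfolding sqrt_factor_def by (rule someI_ex)
  then show ?thesis
    by (simp add: mmul_def mtrans_def fun_eq_iff)
qed

section \<open>Second moments of Gaussian vectors\<close>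

lemma relu_ab_sq: "(relu_ab a b x)\<^sup>2 = a\<^sup>2 * (max x 0)\<^sup>2 + b\<^sup>2 * (min x 0)\<^sup>2"
  by (simp add: relu_ab_def power2_eq_square)

lemma borel_measurable_relu_ab[measurable]: "relu_ab a b \<in> borel_measurable borel"
  unfolding relu_ab_def by measurable

context prob_space
begin

lemma normal_second_moment:
  assumes X: "distributed M lborel X (normal_density 0 \<sigma>)" and "0 < \<sigma>"
  shows "integrable M (\<lambda>x. (X x)\<^sup>2)" and "(\<integral>x. (X x)\<^sup>2 \<partial>M) = \<sigma>\<^sup>2"
proof -
  have "integrable lborel (\<lambda>x. normal_density 0 \<sigma> x * x\<^sup>2)"
    using integrable_normal_moment[of \<sigma> 0 2] assms(2) by simp
  then show "integrable M (\<lambda>x. (X x)\<^sup>2)"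
    using distributed_integrable[OF X, of "\<lambda>x. x\<^sup>2"] by simp
  have "(\<integral>x. (X x)\<^sup>2 \<partial>M) = (\<integral>x. normal_density 0 \<sigma> x * x\<^sup>2 \<partial>lborel)"
    using distributed_integral[OF X, of "\<lambda>x. x\<^sup>2"] by simp
  also have "\<dots> = \<sigma>\<^sup>2"
    using integral_normal_moment_even[of \<sigma> 0 1] assms(2) by (simp add: power2_eq_square)
  finally show "(\<integral>x. (X x)\<^sup>2 \<partial>M) = \<sigma>\<^sup>2" .
qed

lemma normal_reflect_integral:
  fixes g :: "real \<Rightarrow> real"
  assumes X: "distributed M lborel X (normal_density 0 \<sigma>)" and "0 < \<sigma>"
    and g: "g \<in> borel_measurable borel"
  shows "(\<integral>x. g (X x) \<partial>M) = (\<integral>x. g (- X x) \<partial>M)"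
proof -
  have "distributed M lborel (\<lambda>x. 0 + - 1 * X x) (normal_density 0 \<sigma>)"
    using normal_density_affine[OF X assms(2), of "-1" 0] by simp
  then show ?thesis
    using distributed_integral[OF X, of g] distributed_integral[of M lborel "\<lambda>x. - X x", of _ g] g
    by simp
qed

text \<open>By symmetry of the centred normal law, each half-line carries half of the second moment.\<close>
lemma normal_relu_second_moment:
  assumes X: "distributed M lborel X (normal_density 0 \<sigma>)" and "0 < \<sigma>"
  shows "integrable M (\<lambda>x. (relu_ab a b (X x))\<^sup>2)"
    and "(\<integral>x. (relu_ab a b (X x))\<^sup>2 \<partial>M) = (a\<^sup>2 + b\<^sup>2) / 2 * \<sigma>\<^sup>2"
proof -
  note sq = normal_second_moment[OF assms]
  have "X \<in> borel_measurable M"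
    using distributed_measurable[OF X] by simp
  then have "(\<lambda>x. (max (X x) 0)\<^sup>2) \<in> borel_measurable M" "(\<lambda>x. (min (X x) 0)\<^sup>2) \<in> borel_measurable M"
    by measurable
  moreover have "(max y 0)\<^sup>2 \<le> y\<^sup>2" "(min y 0)\<^sup>2 \<le> y\<^sup>2"
    and split: "(max y 0)\<^sup>2 + (min y 0)\<^sup>2 = y\<^sup>2" and reflect: "(max (- y) 0)\<^sup>2 = (min y 0)\<^sup>2" for y :: real
    by (cases "0 \<le> y"; simp)+
  ultimately have pos: "integrable M (\<lambda>x. (max (X x) 0)\<^sup>2)" and neg: "integrable M (\<lambda>x. (min (X x) 0)\<^sup>2)"
    by (auto intro!: Bochner_Integration.integrable_bound[OF sq(1)] AE_I2)
  show "integrable M (\<lambda>x. (relu_ab a b (X x))\<^sup>2)"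
    unfolding relu_ab_sq using pos neg by simp
  have "(\<integral>x. (max (X x) 0)\<^sup>2 \<partial>M) = (\<integral>x. (max (- X x) 0)\<^sup>2 \<partial>M)"
    by (rule normal_reflect_integral[OF assms]) measurable
  also have "\<dots> = (\<integral>x. (min (X x) 0)\<^sup>2 \<partial>M)"
    by (simp only: reflect)
  finally have halves: "(\<integral>x. (max (X x) 0)\<^sup>2 \<partial>M) = (\<integral>x. (min (X x) 0)\<^sup>2 \<partial>M)" .
  have "(\<integral>x. (max (X x) 0)\<^sup>2 \<partial>M) + (\<integral>x. (min (X x) 0)\<^sup>2 \<partial>M) = (\<integral>x. (X x)\<^sup>2 \<partial>M)"
    using pos neg by (simp add: Bochner_Integration.integral_add[symmetric] split)
  then have half: "(\<integral>x. (max (X x) 0)\<^sup>2 \<partial>M) = \<sigma>\<^sup>2 / 2" "(\<integral>x. (min (X x) 0)\<^sup>2 \<partial>M) = \<sigma>\<^sup>2 / 2"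
    using halves sq(2) by simp_all
  have "(\<integral>x. (relu_ab a b (X x))\<^sup>2 \<partial>M)
      = a\<^sup>2 * (\<integral>x. (max (X x) 0)\<^sup>2 \<partial>M) + b\<^sup>2 * (\<integral>x. (min (X x) 0)\<^sup>2 \<partial>M)"
    unfolding relu_ab_sq using pos neg by simp
  then show "(\<integral>x. (relu_ab a b (X x))\<^sup>2 \<partial>M) = (a\<^sup>2 + b\<^sup>2) / 2 * \<sigma>\<^sup>2"
    unfolding half by (simp add: algebra_simps)
qed

lemma normal_small_ball:
  assumes X: "distributed M lborel X (normal_density 0 \<sigma>)" and "0 < \<sigma>" and "0 < r"
  shows "prob {x \<in> space M. \<bar>X x\<bar> < r} \<le> 2 * r / sqrt (2 * pi * \<sigma>\<^sup>2)"
proof -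
  define c where "c = 1 / sqrt (2 * pi * \<sigma>\<^sup>2)"
  have c: "0 \<le> c" by (simp add: c_def)
  have density_le: "normal_density 0 \<sigma> x \<le> c" for x
    unfolding normal_density_def c_def by (rule mult_left_le) simp_all
  have "{x \<in> space M. \<bar>X x\<bar> < r} = X -` {- r<..<r} \<inter> space M"
    by (auto simp: abs_less_iff)
  then have "emeasure M {x \<in> space M. \<bar>X x\<bar> < r}
      = (\<integral>\<^sup>+x. ennreal (normal_density 0 \<sigma> x) * indicator {- r<..<r} x \<partial>lborel)"
    using distributed_emeasure[OF X, of "{- r<..<r}"] by simp
  also have "\<dots> \<le> (\<integral>\<^sup>+x. ennreal c * indicator {- r<..<r} x \<partial>lborel)"
    by (intro nn_integral_mono) (auto simp: indicator_def density_le ennreal_leI)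
  also have "\<dots> = ennreal (c * (2 * r))"
    using \<open>0 < r\<close> c by (simp add: nn_integral_cmult_indicator ennreal_mult)
  finally show ?thesis
    unfolding measure_def using c \<open>0 < r\<close> by (intro enn2real_leI) (simp_all add: c_def)
qed

end

definition std_gauss :: "('n::finite \<Rightarrow> real) measure" where
  "std_gauss = PiM UNIV (\<lambda>_. std_normal)"

lemma prob_space_std_normal: "prob_space std_normal"
  unfolding std_normal_def using prob_space_normal_density[of 1 0] by simp

lemma prob_space_std_gauss: "prob_space std_gauss"
  unfolding std_gauss_def by (intro prob_space_PiM prob_space_std_normal)

lemma sets_std_gauss[measurable_cong]: "sets std_gauss = sets (PiM UNIV (\<lambda>_. borel))"
  unfolding std_gauss_def by (rule sets_PiM_cong) (simp_all add: std_normal_def)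

lemma space_std_gauss: "space std_gauss = UNIV"
  by (simp add: std_gauss_def space_PiM std_normal_def)

lemma borel_measurable_dot[measurable]: "dot m \<in> borel_measurable (PiM UNIV (\<lambda>_. borel))"
  unfolding dot_def by measurable

lemma distr_std_gauss_coord: "distr std_gauss borel (\<lambda>z. z k) = std_normal"
proof -
  have "distr std_gauss borel (\<lambda>z. z k) = distr std_gauss std_normal (\<lambda>z. z k)"
    by (rule distr_cong) (simp_all add: std_normal_def)
  also have "\<dots> = std_normal"
    unfolding std_gauss_def by (rule distr_PiM_component) (simp_all add: prob_space_std_normal)
  finally show ?thesis .
qed

lemma std_gauss_coord_distributed:
  "distributed std_gauss lborel (\<lambda>z. z k) std_normal_density"
proof -
  have "distr std_gauss lborel (\<lambda>z. z k) = distr std_gauss borel (\<lambda>z. z k)"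
    by (rule distr_cong) simp_all
  then show ?thesis
    unfolding distributed_def by (simp add: distr_std_gauss_coord std_normal_def)
qed

lemma indep_vars_std_gauss_coords:
  "prob_space.indep_vars std_gauss (\<lambda>_. borel) (\<lambda>k z. z k) UNIV"
proof -
  interpret prob_space std_gauss by (rule prob_space_std_gauss)
  have "distr std_gauss (PiM UNIV (\<lambda>_. borel)) (\<lambda>x. \<lambda>i\<in>UNIV. x i) = distr std_gauss std_gauss (\<lambda>x. x)"
    by (rule distr_cong) (simp_all add: sets_std_gauss restrict_def)
  also have "\<dots> = std_gauss"
    by (rule distr_id)
  also have "\<dots> = PiM UNIV (\<lambda>i. distr std_gauss borel (\<lambda>z. z i))"
    unfolding distr_std_gauss_coord by (simp only: std_gauss_def)
  finally show ?thesis
    by (subst indep_vars_iff_distr_eq_PiM) auto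
qed

lemma dot_self_pos:
  assumes "m \<noteq> (\<lambda>_. 0)"
  shows "0 < dot m m"
proof -
  obtain k where "m k \<noteq> 0"
    using assms by auto
  then show ?thesis
    unfolding dot_def by (intro sum_pos2[of UNIV k]) (auto simp: power2_eq_square[symmetric])
qed

lemma std_gauss_dot_distributed:
  assumes "m \<noteq> (\<lambda>_. 0)"
  shows "distributed std_gauss lborel (dot m) (normal_density 0 (sqrt (dot m m)))"
proof -
  interpret prob_space std_gauss by (rule prob_space_std_gauss)
  define I where "I = {k. m k \<noteq> 0}"
  have I: "finite I" "I \<noteq> {}"
    using assms by (auto simp: I_def fun_eq_iff)
  have "indep_vars (\<lambda>_. borel) (\<lambda>k. (\<lambda>x. m k * x) \<circ> (\<lambda>z. z k)) UNIV"
    by (rule indep_vars_compose[OF indep_vars_std_gauss_coords]) auto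
  then have indep: "indep_vars (\<lambda>_. borel) (\<lambda>k z. m k * z k) I"
    using indep_vars_subset[of _ _ UNIV I] by (simp add: o_def)
  have "distributed std_gauss lborel (\<lambda>z. m k * z k) (normal_density 0 \<bar>m k\<bar>)" if "k \<in> I" for k
    using normal_density_affine[OF std_gauss_coord_distributed[of k], of "m k" 0] that
    by (simp add: I_def)
  then have "distributed std_gauss lborel (\<lambda>z. \<Sum>k\<in>I. m k * z k)
      (normal_density (\<Sum>k\<in>I. 0) (sqrt (\<Sum>k\<in>I. \<bar>m k\<bar>\<^sup>2)))"
    by (intro sum_indep_normal[OF I indep]) (auto simp: I_def)
  moreover have "(\<lambda>z. \<Sum>k\<in>I. m k * z k) = dot m"
    unfolding dot_def by (intro ext sum.mono_neutral_left) (auto simp: I_def)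
  moreover have "(\<Sum>k\<in>I. \<bar>m k\<bar>\<^sup>2) = dot m m"
    unfolding dot_def power2_eq_square abs_mult_self_eq by (intro sum.mono_neutral_left) (auto simp: I_def)
  ultimately show ?thesis by simp
qed

lemma std_gauss_dot_sq:
  shows "integrable std_gauss (\<lambda>z. (dot m z)\<^sup>2)" and "(\<integral>z. (dot m z)\<^sup>2 \<partial>std_gauss) = dot m m"
proof -
  have "integrable std_gauss (\<lambda>z. (dot m z)\<^sup>2) \<and> (\<integral>z. (dot m z)\<^sup>2 \<partial>std_gauss) = dot m m"
  proof (cases "m = (\<lambda>_. 0)")
    case False
    then show ?thesis
      using prob_space.normal_second_moment[OF prob_space_std_gauss std_gauss_dot_distributed[OF False]]
        dot_self_pos[OF False] by (simp add: less_imp_le)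
  qed (simp add: dot_def)
  then show "integrable std_gauss (\<lambda>z. (dot m z)\<^sup>2)" "(\<integral>z. (dot m z)\<^sup>2 \<partial>std_gauss) = dot m m"
    by simp_all
qed

lemma std_gauss_relu_dot_sq:
  shows "integrable std_gauss (\<lambda>z. (relu_ab a b (dot m z))\<^sup>2)"
    and "(\<integral>z. (relu_ab a b (dot m z))\<^sup>2 \<partial>std_gauss) = (a\<^sup>2 + b\<^sup>2) / 2 * dot m m"
proof -
  have "integrable std_gauss (\<lambda>z. (relu_ab a b (dot m z))\<^sup>2)
      \<and> (\<integral>z. (relu_ab a b (dot m z))\<^sup>2 \<partial>std_gauss) = (a\<^sup>2 + b\<^sup>2) / 2 * dot m m"
  proof (cases "m = (\<lambda>_. 0)")
    case False
    then show ?thesis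
      using prob_space.normal_relu_second_moment[OF prob_space_std_gauss std_gauss_dot_distributed[OF False]]
        dot_self_pos[OF False] by (simp add: less_imp_le)
  qed (simp add: dot_def relu_ab_def)
  then show "integrable std_gauss (\<lambda>z. (relu_ab a b (dot m z))\<^sup>2)"
    "(\<integral>z. (relu_ab a b (dot m z))\<^sup>2 \<partial>std_gauss) = (a\<^sup>2 + b\<^sup>2) / 2 * dot m m"
    by simp_all
qed

lemma mvnormal_eq_distr:
  "mvnormal S = distr std_gauss (PiM UNIV (\<lambda>_. borel)) (mulv (sqrt_factor S))"
  unfolding mvnormal_def std_gauss_def mulv_def ..

lemma mulv_eq_dot: "mulv M v i = dot (M i) v"
  by (simp add: mulv_def dot_def)

lemma measurable_mulv[measurable]:
  "mulv M \<in> measurable (PiM UNIV (\<lambda>_. borel)) (PiM UNIV (\<lambda>_. borel))"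
  by (rule measurable_PiM_single') (auto simp: mulv_eq_dot space_PiM intro: borel_measurable_dot)

lemma sets_mvnormal[measurable_cong]: "sets (mvnormal S) = sets (PiM UNIV (\<lambda>_. borel))"
  unfolding mvnormal_eq_distr by simp

lemma prob_space_mvnormal: "prob_space (mvnormal S)"
  unfolding mvnormal_eq_distr
  by (rule prob_space.prob_space_distr[OF prob_space_std_gauss]) measurable

lemma integral_mvnormal:
  fixes g :: "('n::finite \<Rightarrow> real) \<Rightarrow> real"
  assumes "g \<in> borel_measurable (PiM UNIV (\<lambda>_. borel))"
  shows "(\<integral>h. g h \<partial>mvnormal S) = (\<integral>z. g (mulv (sqrt_factor S) z) \<partial>std_gauss)"
    and "integrable (mvnormal S) g \<longleftrightarrow> integrable std_gauss (\<lambda>z. g (mulv (sqrt_factor S) z))"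
  unfolding mvnormal_eq_distr using assms
  by (simp_all add: integral_distr integrable_distr_eq)

lemma dot_sqrt_factor: "psd S \<Longrightarrow> dot (sqrt_factor S i) (sqrt_factor S j) = S i j"
  unfolding dot_def by (rule sqrt_factor_psd)

lemma psd_diag_nonneg: "psd S \<Longrightarrow> 0 \<le> S i i"
  using dot_sqrt_factor[of S i i] dot_self_nonneg by metis

lemma mvnormal_prod:
  fixes S :: "'n::finite \<Rightarrow> 'n \<Rightarrow> real"
  assumes "psd S"
  shows "integrable (mvnormal S) (\<lambda>h. h i * h j)" and "(\<integral>h. h i * h j \<partial>mvnormal S) = S i j"
proof -
  define p where "p = (\<lambda>k. sqrt_factor S i k + sqrt_factor S j k)"
  define q where "q = (\<lambda>k. sqrt_factor S i k - sqrt_factor S j k)"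
  have polar: "mulv (sqrt_factor S) z i * mulv (sqrt_factor S) z j = ((dot p z)\<^sup>2 - (dot q z)\<^sup>2) / 4" for z
    by (simp add: mulv_eq_dot dot_def p_def q_def sum.distrib sum_subtractf algebra_simps power2_eq_square)
  note P = std_gauss_dot_sq[of p] and Q = std_gauss_dot_sq[of q]
  have "(\<lambda>h. h i * h j) \<in> borel_measurable (PiM UNIV (\<lambda>_. borel :: real measure))"
    by measurable
  note transfer = integral_mvnormal[OF this]
  show "integrable (mvnormal S) (\<lambda>h. h i * h j)"
    unfolding transfer(2) polar using P Q by simp
  have "(\<integral>h. h i * h j \<partial>mvnormal S) = (dot p p - dot q q) / 4"
    unfolding transfer(1) polar using P Q by simp
  also have "\<dots> = dot (sqrt_factor S i) (sqrt_factor S j)"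
    by (simp add: p_def q_def dot_def sum_subtractf[symmetric] sum_divide_distrib algebra_simps)
  finally show "(\<integral>h. h i * h j \<partial>mvnormal S) = S i j"
    using dot_sqrt_factor[OF assms] by simp
qed

lemma mvnormal_relu_sq:
  assumes "psd S"
  shows "integrable (mvnormal S) (\<lambda>h. (relu_ab a b (h i))\<^sup>2)"
    and "(\<integral>h. (relu_ab a b (h i))\<^sup>2 \<partial>mvnormal S) = (a\<^sup>2 + b\<^sup>2) / 2 * S i i"
  using std_gauss_relu_dot_sq[of a b "sqrt_factor S i"] dot_sqrt_factor[OF assms, of i i]
  by (simp_all add: integral_mvnormal mulv_eq_dot)

lemma integrable_mvnormal_relu_prod:
  assumes "psd S"
  shows "integrable (mvnormal S) (\<lambda>h. relu_ab a b (h i) * relu_ab a b (h j))"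
proof (rule Bochner_Integration.integrable_bound)
  show "integrable (mvnormal S) (\<lambda>h. (relu_ab a b (h i))\<^sup>2 + (relu_ab a b (h j))\<^sup>2)"
    using mvnormal_relu_sq[OF assms] by simp
  show "(\<lambda>h. relu_ab a b (h i) * relu_ab a b (h j)) \<in> borel_measurable (mvnormal S)"
    by measurable
  have "\<bar>x * y\<bar> \<le> x\<^sup>2 + y\<^sup>2" for x y :: real
  proof -
    have "2 * (\<bar>x\<bar> * \<bar>y\<bar>) \<le> x\<^sup>2 + y\<^sup>2"
      using sum_squares_bound[of "\<bar>x\<bar>" "\<bar>y\<bar>"] by (simp add: mult.assoc)
    then show ?thesis
      unfolding abs_mult using mult_nonneg_nonneg[OF abs_ge_zero[of x] abs_ge_zero[of y]] by linarith
  qed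
  then show "AE h in mvnormal S. norm (relu_ab a b (h i) * relu_ab a b (h j))
      \<le> norm ((relu_ab a b (h i))\<^sup>2 + (relu_ab a b (h j))\<^sup>2)"
    by (intro AE_I2) simp
qed

lemma mvnormal_small_ball:
  assumes "psd S" and "0 < S i i" and "0 < r"
  shows "measure (mvnormal S) {h. \<bar>h i\<bar> < r} \<le> 2 * r / sqrt (2 * pi * S i i)"
proof -
  define m where "m = sqrt_factor S i"
  have m: "dot m m = S i i"
    unfolding m_def by (rule dot_sqrt_factor[OF assms(1)])
  then have "m \<noteq> (\<lambda>_. 0)"
    using assms(2) by (auto simp: dot_def)
  note gauss = std_gauss_dot_distributed[OF this]
  have "{h \<in> space (PiM UNIV (\<lambda>_. borel)). \<bar>h i\<bar> < r} \<in> sets (PiM UNIV (\<lambda>_. borel))"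
    by measurable
  then have "{h. \<bar>h i\<bar> < r} \<in> sets (PiM UNIV (\<lambda>_. borel))"
    by (simp add: space_PiM)
  then have "measure (mvnormal S) {h. \<bar>h i\<bar> < r} = measure std_gauss {z \<in> space std_gauss. \<bar>dot m z\<bar> < r}"
    unfolding mvnormal_eq_distr
    by (subst measure_distr) (auto simp: m_def mulv_eq_dot space_std_gauss vimage_def)
  also have "\<dots> \<le> 2 * r / sqrt (2 * pi * (sqrt (dot m m))\<^sup>2)"
    using assms(2,3) m by (intro prob_space.normal_small_ball[OF prob_space_std_gauss gauss]) simp_all
  finally show ?thesis
    using assms(2) m by simp
qed

section \<open>The covariance recursion\<close>

definition frob_inner :: "('n::finite \<Rightarrow> 'n \<Rightarrow> real) \<Rightarrow> ('n \<Rightarrow> 'n \<Rightarrow> real) \<Rightarrow> real" where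
  "frob_inner B S = (\<Sum>i\<in>UNIV. \<Sum>j\<in>UNIV. B i j * S i j)"

definition mtrace :: "('n::finite \<Rightarrow> 'n \<Rightarrow> real) \<Rightarrow> real" where
  "mtrace S = (\<Sum>i\<in>UNIV. S i i)"

definition id_mat :: "'n \<Rightarrow> 'n \<Rightarrow> real" where
  "id_mat i j = (if i = j then 1 else 0)"

lemma frob_inner_id_mat: "frob_inner id_mat S = mtrace S"
  by (simp add: frob_inner_def mtrace_def id_mat_def sum_delta_mult)

lemma quad_form_id_mat: "quad_form_on UNIV id_mat v = dot v v"
proof -
  have "quad_form_on UNIV id_mat v = (\<Sum>i\<in>UNIV. v i * (\<Sum>j\<in>UNIV. id_mat i j * v j))"
    by (simp add: quad_form_on_def sum_distrib_left mult.assoc)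
  then show ?thesis
    by (simp add: id_mat_def sum_delta_mult dot_def)
qed

lemma quad_form_L_hat: "quad_form_on UNIV (L_hat A) v = dot v (mulv (L_hat A) v)"
  by (simp add: quad_form_on_def dot_mulv_eq_double_sum)

lemma frob_inner_outer: "frob_inner (\<lambda>i j. v i * v j) S = quad_form_on UNIV S v"
  by (simp add: frob_inner_def quad_form_on_def mult_ac)

lemma quad_form_outer: "quad_form_on UNIV (\<lambda>i j. v i * v j) y = (dot v y)\<^sup>2"
  by (simp add: quad_form_on_def dot_def power2_eq_square sum_product mult_ac)

lemma mmul_mtrans_eq_sum:
  "mmul (mmul M G) (mtrans M) i j = (\<Sum>l\<in>UNIV. \<Sum>k\<in>UNIV. M i l * M j k * G l k)"
proof -
  have "mmul (mmul M G) (mtrans M) i j = (\<Sum>k\<in>UNIV. \<Sum>l\<in>UNIV. M i l * G l k * M j k)"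
    by (simp add: mmul_def mtrans_def sum_distrib_right)
  also have "\<dots> = (\<Sum>l\<in>UNIV. \<Sum>k\<in>UNIV. M i l * M j k * G l k)"
    by (subst sum.swap) (simp add: mult_ac)
  finally show ?thesis .
qed

lemma integral_double_sum:
  fixes f :: "'i \<Rightarrow> 'j \<Rightarrow> 'a \<Rightarrow> real"
  assumes "\<And>i j. integrable M (f i j)"
  shows "integrable M (\<lambda>x. \<Sum>i\<in>I. \<Sum>j\<in>J. f i j x)"
    and "(\<integral>x. (\<Sum>i\<in>I. \<Sum>j\<in>J. f i j x) \<partial>M) = (\<Sum>i\<in>I. \<Sum>j\<in>J. integral\<^sup>L M (f i j))"
proof -
  have inner: "integrable M (\<lambda>x. \<Sum>j\<in>J. f i j x)" for i
    using assms by (rule Bochner_Integration.integrable_sum)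
  then show "integrable M (\<lambda>x. \<Sum>i\<in>I. \<Sum>j\<in>J. f i j x)"
    by (rule Bochner_Integration.integrable_sum)
  show "(\<integral>x. (\<Sum>i\<in>I. \<Sum>j\<in>J. f i j x) \<partial>M) = (\<Sum>i\<in>I. \<Sum>j\<in>J. integral\<^sup>L M (f i j))"
    using inner assms by (simp add: Bochner_Integration.integral_sum)
qed

lemma mmul_integral_outer:
  fixes f :: "'a \<Rightarrow> 'n::finite \<Rightarrow> real" and M :: "'m \<Rightarrow> 'n \<Rightarrow> real"
  assumes int: "\<And>l k. integrable \<mu> (\<lambda>x. f x l * f x k)"
  shows "integrable \<mu> (\<lambda>x. mulv M (f x) i * mulv M (f x) j)"
    and "mmul (mmul M (\<lambda>l k. \<integral>x. f x l * f x k \<partial>\<mu>)) (mtrans M) i j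
       = (\<integral>x. mulv M (f x) i * mulv M (f x) j \<partial>\<mu>)"
proof -
  have expand: "mulv M (f x) i * mulv M (f x) j
      = (\<Sum>l\<in>UNIV. \<Sum>k\<in>UNIV. M i l * M j k * (f x l * f x k))" for x
    by (simp add: mulv_def sum_product mult_ac)
  show "integrable \<mu> (\<lambda>x. mulv M (f x) i * mulv M (f x) j)"
    unfolding expand using int by simp
  show "mmul (mmul M (\<lambda>l k. \<integral>x. f x l * f x k \<partial>\<mu>)) (mtrans M) i j
      = (\<integral>x. mulv M (f x) i * mulv M (f x) j \<partial>\<mu>)"
    unfolding expand mmul_mtrans_eq_sum using int by simp
qed

definition next_cov :: "(real \<Rightarrow> real) \<Rightarrow> real \<Rightarrow> ('n::finite \<Rightarrow> 'n \<Rightarrow> real) \<Rightarrow> ('n \<Rightarrow> 'n \<Rightarrow> real)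
    \<Rightarrow> 'n \<Rightarrow> 'n \<Rightarrow> real" where
  "next_cov \<sigma> sw A S = (\<lambda>i j. sw * mmul (mmul (A_hat A) (Gmat \<sigma> S)) (A_hat A) i j)"

lemma cov_Suc_Suc: "cov \<sigma> sw A X (Suc (Suc l)) = next_cov \<sigma> sw A (cov \<sigma> sw A X (Suc l))"
  by (simp add: next_cov_def)

lemma mtrans_A_hat: "is_adj A \<Longrightarrow> mtrans (A_hat A) = A_hat A"
  by (simp add: mtrans_def A_hat_sym fun_eq_iff)

context
  fixes A :: "'n::finite \<Rightarrow> 'n \<Rightarrow> real" and S :: "'n \<Rightarrow> 'n \<Rightarrow> real" and \<sigma> :: "real \<Rightarrow> real"
  assumes adj: "is_adj A"
    and int: "\<And>l k. integrable (mvnormal S) (\<lambda>h. \<sigma> (h l) * \<sigma> (h k))"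
begin

lemma next_cov_eq_integral:
  "next_cov \<sigma> sw A S i j
     = sw * (\<integral>h. mulv (A_hat A) (\<lambda>p. \<sigma> (h p)) i * mulv (A_hat A) (\<lambda>p. \<sigma> (h p)) j \<partial>mvnormal S)"
proof -
  have "Gmat \<sigma> S = (\<lambda>l k. \<integral>h. \<sigma> (h l) * \<sigma> (h k) \<partial>mvnormal S)"
    by (simp add: fun_eq_iff Gmat_def)
  then show ?thesis
    using mmul_integral_outer(2)[where f="\<lambda>h p. \<sigma> (h p)" and \<mu>="mvnormal S" and M="A_hat A", OF int]
    by (simp add: next_cov_def mtrans_A_hat[OF adj])
qed

lemma frob_inner_next_cov:
  "integrable (mvnormal S) (\<lambda>h. quad_form_on UNIV B (mulv (A_hat A) (\<lambda>p. \<sigma> (h p))))"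
  "frob_inner B (next_cov \<sigma> sw A S)
     = sw * (\<integral>h. quad_form_on UNIV B (mulv (A_hat A) (\<lambda>p. \<sigma> (h p))) \<partial>mvnormal S)"
proof -
  note int_outer = mmul_integral_outer(1)[where f="\<lambda>h p. \<sigma> (h p)" and \<mu>="mvnormal S", OF int]
  have expand: "quad_form_on UNIV B (mulv (A_hat A) (\<lambda>p. \<sigma> (h p)))
      = (\<Sum>i\<in>UNIV. \<Sum>j\<in>UNIV. B i j * (mulv (A_hat A) (\<lambda>p. \<sigma> (h p)) i * mulv (A_hat A) (\<lambda>p. \<sigma> (h p)) j))" for h
    by (simp add: quad_form_on_def mult_ac)
  show "integrable (mvnormal S) (\<lambda>h. quad_form_on UNIV B (mulv (A_hat A) (\<lambda>p. \<sigma> (h p))))"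
    unfolding expand by (intro integral_double_sum(1) Bochner_Integration.integrable_mult_right int_outer)
  show "frob_inner B (next_cov \<sigma> sw A S)
      = sw * (\<integral>h. quad_form_on UNIV B (mulv (A_hat A) (\<lambda>p. \<sigma> (h p))) \<partial>mvnormal S)"
    unfolding expand frob_inner_def next_cov_eq_integral
    by (subst integral_double_sum(2)) (simp_all add: int_outer sum_distrib_left mult_ac)
qed

end

lemma mvnormal_relu_norm_sq:
  assumes "psd S"
  shows "integrable (mvnormal S) (\<lambda>h. dot (\<lambda>p. relu_ab a b (h p)) (\<lambda>p. relu_ab a b (h p)))"
    and "(\<integral>h. dot (\<lambda>p. relu_ab a b (h p)) (\<lambda>p. relu_ab a b (h p)) \<partial>mvnormal S)
       = (a\<^sup>2 + b\<^sup>2) / 2 * mtrace S"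
proof -
  have expand: "dot (\<lambda>p. relu_ab a b (h p)) (\<lambda>p. relu_ab a b (h p)) = (\<Sum>i\<in>UNIV. (relu_ab a b (h i))\<^sup>2)" for h
    by (simp add: dot_def power2_eq_square)
  show "integrable (mvnormal S) (\<lambda>h. dot (\<lambda>p. relu_ab a b (h p)) (\<lambda>p. relu_ab a b (h p)))"
    unfolding expand using mvnormal_relu_sq(1)[OF assms] by simp
  show "(\<integral>h. dot (\<lambda>p. relu_ab a b (h p)) (\<lambda>p. relu_ab a b (h p)) \<partial>mvnormal S)
      = (a\<^sup>2 + b\<^sup>2) / 2 * mtrace S"
    unfolding expand
    by (simp only: Bochner_Integration.integral_sum mvnormal_relu_sq[OF assms])
      (simp add: mtrace_def sum_distrib_left)
qed

context
  fixes A :: "'n::finite \<Rightarrow> 'n \<Rightarrow> real" and S :: "'n \<Rightarrow> 'n \<Rightarrow> real" and a b sw :: real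
  assumes adj: "is_adj A" and psd: "psd S"
begin

abbreviation relu_out :: "('n \<Rightarrow> real) \<Rightarrow> 'n \<Rightarrow> real" where
  "relu_out h \<equiv> mulv (A_hat A) (\<lambda>p. relu_ab a b (h p))"

lemmas frob_inner_next_relu =
  frob_inner_next_cov[OF adj integrable_mvnormal_relu_prod[OF psd, of a b]]

lemma psd_next_cov:
  assumes sw: "0 \<le> sw"
  shows "psd (next_cov (relu_ab a b) sw A S)"
  unfolding psd_def
proof (intro conjI allI)
  fix i j
  show "next_cov (relu_ab a b) sw A S i j = next_cov (relu_ab a b) sw A S j i"
    by (simp add: next_cov_eq_integral[OF adj integrable_mvnormal_relu_prod[OF psd, of a b]] mult.commute)
next
  fix v
  have "quad_form_on UNIV (next_cov (relu_ab a b) sw A S) v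
      = frob_inner (\<lambda>i j. v i * v j) (next_cov (relu_ab a b) sw A S)"
    by (rule frob_inner_outer[symmetric])
  also have "\<dots> = sw * (\<integral>h. (dot v (relu_out h))\<^sup>2 \<partial>mvnormal S)"
    by (simp only: frob_inner_next_relu quad_form_outer)
  finally show "0 \<le> quad_form_on UNIV (next_cov (relu_ab a b) sw A S) v"
    using sw by simp
qed

lemma trace_next_cov_eq:
  "mtrace (next_cov (relu_ab a b) sw A S) = sw * (\<integral>h. dot (relu_out h) (relu_out h) \<partial>mvnormal S)"
  by (simp add: frob_inner_id_mat[symmetric] frob_inner_next_relu quad_form_id_mat)

lemma trace_next_cov_le:
  assumes sw: "0 \<le> sw"
  shows "mtrace (next_cov (relu_ab a b) sw A S) \<le> sw * ((a\<^sup>2 + b\<^sup>2) / 2 * mtrace S)"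
proof -
  have "(\<integral>h. dot (relu_out h) (relu_out h) \<partial>mvnormal S)
      \<le> (\<integral>h. dot (\<lambda>p. relu_ab a b (h p)) (\<lambda>p. relu_ab a b (h p)) \<partial>mvnormal S)"
    using frob_inner_next_relu(1)[of id_mat] mvnormal_relu_norm_sq(1)[OF psd]
    by (intro integral_mono) (simp_all add: quad_form_id_mat norm_A_hat_le[OF adj])
  then show ?thesis
    unfolding trace_next_cov_eq mvnormal_relu_norm_sq(2)[OF psd] using sw by (rule mult_left_mono)
qed

lemma dirichlet_next_cov_le:
  assumes sw: "0 \<le> sw"
  shows "frob_inner (L_hat A) (next_cov (relu_ab a b) sw A S)
     \<le> smoothing_const A * (sw * ((a\<^sup>2 + b\<^sup>2) / 2 * mtrace S) - mtrace (next_cov (relu_ab a b) sw A S))"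
proof -
  note int_norm = frob_inner_next_relu(1)[of id_mat, unfolded quad_form_id_mat]
    and int_relu = mvnormal_relu_norm_sq(1)[OF psd]
  have "(\<integral>h. dot (relu_out h) (mulv (L_hat A) (relu_out h)) \<partial>mvnormal S)
      \<le> (\<integral>h. smoothing_const A * (dot (\<lambda>p. relu_ab a b (h p)) (\<lambda>p. relu_ab a b (h p))
                                     - dot (relu_out h) (relu_out h)) \<partial>mvnormal S)"
    using frob_inner_next_relu(1)[of "L_hat A"] int_norm int_relu
    by (intro integral_mono) (simp_all add: quad_form_L_hat dirichlet_A_hat_le[OF adj])
  also have "\<dots> = smoothing_const A * ((a\<^sup>2 + b\<^sup>2) / 2 * mtrace S
                     - (\<integral>h. dot (relu_out h) (relu_out h) \<partial>mvnormal S))"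
    using int_norm int_relu by (simp add: mvnormal_relu_norm_sq(2)[OF psd])
  finally have "(\<integral>h. dot (relu_out h) (mulv (L_hat A) (relu_out h)) \<partial>mvnormal S)
      \<le> smoothing_const A * ((a\<^sup>2 + b\<^sup>2) / 2 * mtrace S
                     - (\<integral>h. dot (relu_out h) (relu_out h) \<partial>mvnormal S))" .
  from mult_left_mono[OF this sw] show ?thesis
    by (simp add: frob_inner_next_relu quad_form_L_hat trace_next_cov_eq algebra_simps)
qed

end

lemma mmul_gram:
  fixes M :: "'m \<Rightarrow> 'n::finite \<Rightarrow> real" and Y :: "'n \<Rightarrow> 'd::finite \<Rightarrow> real"
  shows "mmul (mmul M (mmul Y (mtrans Y))) (mtrans M) i j
       = (\<Sum>k\<in>UNIV. mulv M (\<lambda>p. Y p k) i * mulv M (\<lambda>p. Y p k) j)"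
proof -
  have "mmul (mmul M (mmul Y (mtrans Y))) (mtrans M) i j
      = (\<Sum>l\<in>UNIV. \<Sum>q\<in>UNIV. \<Sum>k\<in>UNIV. (M i l * Y l k) * (M j q * Y q k))"
    unfolding mmul_mtrans_eq_sum by (simp add: mmul_def mtrans_def sum_distrib_left mult_ac)
  also have "\<dots> = (\<Sum>k\<in>UNIV. \<Sum>l\<in>UNIV. \<Sum>q\<in>UNIV. (M i l * Y l k) * (M j q * Y q k))"
    by (subst sum.swap) (intro sum.cong refl sum.swap)
  also have "\<dots> = (\<Sum>k\<in>UNIV. mulv M (\<lambda>p. Y p k) i * mulv M (\<lambda>p. Y p k) j)"
    by (simp add: mulv_def sum_product)
  finally show ?thesis .
qed

context
  fixes A :: "'n::finite \<Rightarrow> 'n \<Rightarrow> real" and X :: "'n \<Rightarrow> 'd::finite \<Rightarrow> real" and sw :: real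
  assumes adj: "is_adj A"
begin

lemma cov_one_eq:
  "cov \<sigma> sw A X (Suc 0) i j
     = sw / real CARD('d) * (\<Sum>k\<in>UNIV. mulv (A_hat A) (\<lambda>p. X p k) i * mulv (A_hat A) (\<lambda>p. X p k) j)"
  using mmul_gram[of "A_hat A" X i j] by (simp add: mtrans_A_hat[OF adj])

lemma psd_cov_one:
  assumes sw: "0 \<le> sw"
  shows "psd (cov \<sigma> sw A X (Suc 0))"
  unfolding psd_def
proof (intro conjI allI)
  fix i j
  show "cov \<sigma> sw A X (Suc 0) i j = cov \<sigma> sw A X (Suc 0) j i"
    unfolding cov_one_eq by (simp add: mult.commute)
next
  fix v
  define y where "y k = mulv (A_hat A) (\<lambda>p. X p k)" for k
  have "quad_form_on UNIV (cov \<sigma> sw A X (Suc 0)) v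
      = sw / real CARD('d) * (\<Sum>i\<in>UNIV. \<Sum>j\<in>UNIV. \<Sum>k\<in>UNIV. (v i * y k i) * (v j * y k j))"
    unfolding quad_form_on_def cov_one_eq y_def by (simp add: sum_distrib_left mult_ac)
  also have "\<dots> = sw / real CARD('d) * (\<Sum>k\<in>UNIV. \<Sum>i\<in>UNIV. \<Sum>j\<in>UNIV. (v i * y k i) * (v j * y k j))"
    by (subst sum.swap) (intro arg_cong[where f="\<lambda>x. _ * x"] sum.cong refl sum.swap)
  also have "\<dots> = sw / real CARD('d) * (\<Sum>k\<in>UNIV. (dot v (y k))\<^sup>2)"
    by (simp add: dot_def power2_eq_square sum_product)
  finally have "quad_form_on UNIV (cov \<sigma> sw A X (Suc 0)) v
      = sw / real CARD('d) * (\<Sum>k\<in>UNIV. (dot v (y k))\<^sup>2)" .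
  then show "0 \<le> quad_form_on UNIV (cov \<sigma> sw A X (Suc 0)) v"
    using sw by (simp add: sum_nonneg)
qed

lemma trace_cov_one_le:
  assumes sw: "0 \<le> sw"
  shows "mtrace (cov \<sigma> sw A X (Suc 0)) \<le> sw / real CARD('d) * frob2X X"
proof -
  have "mtrace (cov \<sigma> sw A X (Suc 0))
      = sw / real CARD('d) * (\<Sum>k\<in>UNIV. dot (mulv (A_hat A) (\<lambda>p. X p k)) (mulv (A_hat A) (\<lambda>p. X p k)))"
    unfolding mtrace_def cov_one_eq dot_def sum_distrib_left[symmetric] by (subst sum.swap) (rule refl)
  also have "\<dots> \<le> sw / real CARD('d) * (\<Sum>k\<in>UNIV. dot (\<lambda>p. X p k) (\<lambda>p. X p k))"
    using sw by (intro mult_left_mono sum_mono norm_A_hat_le[OF adj]) simp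
  also have "(\<Sum>k\<in>UNIV. dot (\<lambda>p. X p k) (\<lambda>p. X p k)) = frob2X X"
    unfolding frob2X_def dot_def power2_eq_square by (rule sum.swap)
  finally show ?thesis .
qed

lemma psd_cov:
  assumes sw: "0 \<le> sw"
  shows "psd (cov (relu_ab a b) sw A X l)"
proof (cases l)
  case 0
  then show ?thesis by (simp add: psd_def quad_form_on_def)
next
  case (Suc m)
  have "psd (cov (relu_ab a b) sw A X (Suc m))"
  proof (induction m)
    case 0
    show ?case by (rule psd_cov_one[OF sw])
  next
    case (Suc m)
    then show ?case
      unfolding cov_Suc_Suc by (rule psd_next_cov[OF adj _ sw])
  qed
  with Suc show ?thesis by simp
qed

end

section \<open>Expected feature norm and Dirichlet energy\<close>

lemma mvnormal_quad_form:
  fixes S :: "'n::finite \<Rightarrow> 'n \<Rightarrow> real"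
  assumes "psd S"
  shows "integrable (mvnormal S) (quad_form_on UNIV B)"
    and "(\<integral>h. quad_form_on UNIV B h \<partial>mvnormal S) = frob_inner B S"
proof -
  have expand: "quad_form_on UNIV B h = (\<Sum>i\<in>UNIV. \<Sum>j\<in>UNIV. B i j * (h i * h j))" for h
    by (simp add: quad_form_on_def mult_ac)
  have "integrable (mvnormal S) (\<lambda>h. B i j * (h i * h j))" for i j
    using mvnormal_prod(1)[OF assms] by simp
  note sums = integral_double_sum[OF this]
  show "integrable (mvnormal S) (quad_form_on UNIV B)"
    using sums(1) by (simp add: expand[abs_def])
  show "(\<integral>h. quad_form_on UNIV B h \<partial>mvnormal S) = frob_inner B S"
    unfolding expand sums(2) using mvnormal_prod[OF assms] by (simp add: frob_inner_def)
qed

lemma prob_space_Hlaw: "prob_space (Hlaw C S)"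
  unfolding Hlaw_def by (intro prob_space_PiM prob_space_mvnormal)

lemma measurable_Hlaw_column: "c < C \<Longrightarrow> (\<lambda>H. H c) \<in> measurable (Hlaw C S) (mvnormal S)"
  unfolding Hlaw_def by (rule measurable_component_singleton) simp

lemma distr_Hlaw_column: "c < C \<Longrightarrow> distr (Hlaw C S) (mvnormal S) (\<lambda>H. H c) = mvnormal S"
  unfolding Hlaw_def by (rule distr_PiM_component) (simp_all add: prob_space_mvnormal)

lemma integral_Hlaw_column:
  fixes g :: "('n::finite \<Rightarrow> real) \<Rightarrow> real"
  assumes c: "c < C" and g: "g \<in> borel_measurable (PiM UNIV (\<lambda>_. borel))"
  shows "(\<integral>H. g (H c) \<partial>Hlaw C S) = (\<integral>h. g h \<partial>mvnormal S)"
    and "integrable (Hlaw C S) (\<lambda>H. g (H c)) \<longleftrightarrow> integrable (mvnormal S) g"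
proof -
  have gm: "g \<in> borel_measurable (mvnormal S)"
    using g by simp
  show "(\<integral>H. g (H c) \<partial>Hlaw C S) = (\<integral>h. g h \<partial>mvnormal S)"
    by (metis integral_distr[OF measurable_Hlaw_column[OF c] gm] distr_Hlaw_column[OF c])
  show "integrable (Hlaw C S) (\<lambda>H. g (H c)) \<longleftrightarrow> integrable (mvnormal S) g"
    by (metis integrable_distr_eq[OF measurable_Hlaw_column[OF c] gm] distr_Hlaw_column[OF c])
qed

lemma borel_measurable_quad_form[measurable]:
  "quad_form_on UNIV B \<in> borel_measurable (PiM UNIV (\<lambda>_. borel))"
  unfolding quad_form_on_def by measurable

lemma Hlaw_sum_quad_form:
  fixes S :: "'n::finite \<Rightarrow> 'n \<Rightarrow> real"
  assumes "psd S"
  shows "integrable (Hlaw C S) (\<lambda>H. \<Sum>c<C. quad_form_on UNIV B (H c))"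
    and "(\<integral>H. (\<Sum>c<C. quad_form_on UNIV B (H c)) \<partial>Hlaw C S) = real C * frob_inner B S"
proof -
  have column: "integrable (Hlaw C S) (\<lambda>H. quad_form_on UNIV B (H c))"
    "(\<integral>H. quad_form_on UNIV B (H c) \<partial>Hlaw C S) = frob_inner B S" if "c \<in> {..<C}" for c
    using that integral_Hlaw_column[OF _ borel_measurable_quad_form, of c C S B] mvnormal_quad_form[OF assms]
    by simp_all
  show "integrable (Hlaw C S) (\<lambda>H. \<Sum>c<C. quad_form_on UNIV B (H c))"
    using column(1) by (rule Bochner_Integration.integrable_sum)
  show "(\<integral>H. (\<Sum>c<C. quad_form_on UNIV B (H c)) \<partial>Hlaw C S) = real C * frob_inner B S"
    using column by (simp add: Bochner_Integration.integral_sum)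
qed

lemma frob2_eq_sum_quad_form: "frob2 C = (\<lambda>H. \<Sum>c<C. quad_form_on UNIV id_mat (H c))"
  by (simp add: fun_eq_iff frob2_def quad_form_id_mat dot_def power2_eq_square)

lemma dirichlet_eq_sum_quad_form: "dirichlet A C = (\<lambda>H. \<Sum>c<C. quad_form_on UNIV (L_hat A) (H c))"
  by (simp add: fun_eq_iff dirichlet_def quad_form_on_def)

lemma FSP_eq_trace:
  assumes "psd (cov \<sigma> sw A X L)"
  shows "FSP \<sigma> C A X L sw = real C * mtrace (cov \<sigma> sw A X L) / frob2X X"
  using Hlaw_sum_quad_form(2)[OF assms, of C id_mat]
  by (simp add: FSP_def frob2_eq_sum_quad_form frob_inner_id_mat)

lemma dirichlet_nonneg: "is_adj A \<Longrightarrow> 0 \<le> dirichlet A C H"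
  by (simp add: dirichlet_eq_sum_quad_form quad_form_L_hat sum_nonneg dot_L_hat_nonneg)

lemma dirichlet_le_frob2: "is_adj A \<Longrightarrow> dirichlet A C H \<le> 2 * frob2 C H"
  unfolding dirichlet_eq_sum_quad_form frob2_eq_sum_quad_form quad_form_L_hat quad_form_id_mat sum_distrib_left
proof (rule sum_mono)
  fix c
  assume "is_adj A"
  have "dot (H c) (mulv (L_hat A) (H c)) \<le> (2 - hat_margin A) * dot (H c) (H c)"
    by (rule dot_L_hat_le[OF \<open>is_adj A\<close>])
  also have "\<dots> \<le> 2 * dot (H c) (H c)"
    using hat_margin_pos[OF \<open>is_adj A\<close>] dot_self_nonneg[of "H c"] by (simp add: mult_right_mono)
  finally show "dot (H c) (mulv (L_hat A) (H c)) \<le> 2 * dot (H c) (H c)" .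
qed

lemma sq_le_frob2: "c < C \<Longrightarrow> (H c i)\<^sup>2 \<le> frob2 C H"
  unfolding frob2_def
  by (rule order.trans[OF member_le_sum[of i UNIV] member_le_sum[of c "{..<C}"]]) (simp_all add: sum_nonneg)

lemma Hlaw_frob2_small_ball:
  fixes S :: "'n::finite \<Rightarrow> 'n \<Rightarrow> real"
  assumes "psd S" and "0 < C" and "0 < S i i" and "0 < \<epsilon>"
  shows "measure (Hlaw C S) {H \<in> space (Hlaw C S). frob2 C H < \<epsilon>} \<le> 2 * sqrt \<epsilon> / sqrt (2 * pi * S i i)"
proof -
  interpret prob_space "Hlaw C S" by (rule prob_space_Hlaw)
  define B where "B = {h :: 'n \<Rightarrow> real. \<bar>h i\<bar> < sqrt \<epsilon>}"
  have "{h \<in> space (PiM UNIV (\<lambda>_. borel)). \<bar>h i\<bar> < sqrt \<epsilon>} \<in> sets (PiM UNIV (\<lambda>_. borel :: real measure))"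
    by measurable
  then have B: "B \<in> sets (mvnormal S)"
    by (simp add: B_def space_PiM)
  note column = measurable_Hlaw_column[OF assms(2)]
  have "{H \<in> space (Hlaw C S). frob2 C H < \<epsilon>} \<subseteq> (\<lambda>H. H 0) -` B \<inter> space (Hlaw C S)"
  proof
    fix H
    assume H: "H \<in> {H \<in> space (Hlaw C S). frob2 C H < \<epsilon>}"
    then have "(H 0 i)\<^sup>2 < \<epsilon>"
      using sq_le_frob2[OF assms(2), of H i] by simp
    from real_sqrt_less_mono[OF this] show "H \<in> (\<lambda>H. H 0) -` B \<inter> space (Hlaw C S)"
      using H by (simp add: B_def)
  qed
  then have "prob {H \<in> space (Hlaw C S). frob2 C H < \<epsilon>} \<le> prob ((\<lambda>H. H 0) -` B \<inter> space (Hlaw C S))"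
    by (intro finite_measure_mono measurable_sets[OF column B])
  also have "\<dots> = measure (mvnormal S) B"
    using measure_distr[OF column B] by (simp add: distr_Hlaw_column[OF assms(2)])
  also have "\<dots> \<le> 2 * sqrt \<epsilon> / sqrt (2 * pi * S i i)"
    unfolding B_def using assms by (intro mvnormal_small_ball) simp_all
  finally show ?thesis .
qed

lemma ratio_bounds:
  fixes d f c :: real
  assumes "0 \<le> d" and "d \<le> c * f" and "0 \<le> c"
  shows "0 \<le> d / f" and "d / f \<le> c"
proof -
  have "d = 0" if "f \<le> 0"
    using assms mult_left_mono[OF that assms(3)] by simp
  then show "0 \<le> d / f" and "d / f \<le> c"
    using assms by (cases "0 < f"; force simp: pos_divide_le_eq mult.commute)+
qed

text \<open>Markov-type splitting: where \<open>F\<close> is small the ratio is bounded by \<open>c\<close>,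
  elsewhere by \<open>D / \<epsilon>\<close>.\<close>
lemma (in prob_space) integral_ratio_le:
  fixes D F :: "'a \<Rightarrow> real"
  assumes D: "integrable M D" and F: "F \<in> borel_measurable M"
    and bounds: "\<And>x. 0 \<le> D x" "\<And>x. D x \<le> c * F x" and c: "0 \<le> c" and \<epsilon>: "0 < \<epsilon>"
  shows "(\<integral>x. D x / F x \<partial>M) \<le> c * prob {x \<in> space M. F x < \<epsilon>} + (\<integral>x. D x \<partial>M) / \<epsilon>"
proof -
  define small where "small = {x \<in> space M. F x < \<epsilon>}"
  have small: "small \<in> events"
    unfolding small_def using F by measurable
  have indicator: "integrable M (indicator small :: 'a \<Rightarrow> real)"
    using small by (intro integrable_real_indicator) (simp_all add: emeasure_eq_measure)
  note ratio = ratio_bounds[OF bounds c]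
  have "(\<lambda>x. D x / F x) \<in> borel_measurable M"
    using borel_measurable_integrable[OF D] F by measurable
  then have "integrable M (\<lambda>x. D x / F x)"
    by (rule Bochner_Integration.integrable_bound[OF integrable_const[of c]])
      (simp add: ratio c flip: abs_divide)
  then have "(\<integral>x. D x / F x \<partial>M) \<le> (\<integral>x. c * indicator small x + D x / \<epsilon> \<partial>M)"
  proof (rule integral_mono)
    show "integrable M (\<lambda>x. c * indicator small x + D x / \<epsilon>)"
      using D indicator by simp
    fix x
    assume x: "x \<in> space M"
    show "D x / F x \<le> c * indicator small x + D x / \<epsilon>"
    proof (cases "x \<in> small")
      case True
      have "0 \<le> D x / \<epsilon>"
        using bounds(1)[of x] \<epsilon> by simp
      then show ?thesis using ratio(2)[of x] True by simp
    next
      case False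
      then have "\<epsilon> \<le> F x" using x by (simp add: small_def)
      then have "D x / F x \<le> D x / \<epsilon>"
        using bounds(1)[of x] \<epsilon> by (intro divide_left_mono) simp_all
      then show ?thesis using False by simp
    qed
  qed
  also have "\<dots> = c * prob small + (\<integral>x. D x \<partial>M) / \<epsilon>"
    using D indicator small by simp
  finally show ?thesis unfolding small_def .
qed

lemma ex_diag_ge_mean:
  fixes S :: "'n::finite \<Rightarrow> 'n \<Rightarrow> real"
  shows "\<exists>i. mtrace S \<le> real CARD('n) * S i i"
proof -
  have "Max (range (\<lambda>j. S j j)) \<in> range (\<lambda>j. S j j)"
    by (intro Max_in) auto
  then obtain i where i: "Max (range (\<lambda>j. S j j)) = S i i"
    by (rule rangeE)
  have "mtrace S \<le> (\<Sum>j\<in>(UNIV::'n set). S i i)"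
    unfolding mtrace_def i[symmetric] by (intro sum_mono Max_ge) auto
  then show ?thesis by auto
qed

lemma mtrace_nonneg: "psd S \<Longrightarrow> 0 \<le> mtrace S"
  unfolding mtrace_def by (intro sum_nonneg psd_diag_nonneg)

lemma Hlaw_dirichlet_ratio_le:
  fixes S :: "'n::finite \<Rightarrow> 'n \<Rightarrow> real"
  assumes adj: "is_adj A" and S: "psd S" and C: "0 < C"
    and \<tau>: "0 < \<tau>" "\<tau> \<le> mtrace S" and \<epsilon>: "0 < \<epsilon>"
  shows "(\<integral>H. dirichlet A C H / frob2 C H \<partial>Hlaw C S)
       \<le> 4 * sqrt \<epsilon> / sqrt (2 * pi * (\<tau> / CARD('n))) + real C * frob_inner (L_hat A) S / \<epsilon>"
proof -
  interpret prob_space "Hlaw C S" by (rule prob_space_Hlaw)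
  obtain i where "mtrace S \<le> real CARD('n) * S i i"
    using ex_diag_ge_mean by blast
  then have Sii: "\<tau> / CARD('n) \<le> S i i"
    using \<tau> by (simp add: divide_le_eq mult.commute)
  have Sii_pos: "0 < S i i"
    using \<tau> Sii by (meson divide_pos_pos less_le_trans of_nat_0_less_iff zero_less_card_finite)
  note D = Hlaw_sum_quad_form[OF S, of C "L_hat A", folded dirichlet_eq_sum_quad_form]
  have F: "frob2 C \<in> borel_measurable (Hlaw C S)"
    using Hlaw_sum_quad_form(1)[OF S, of C id_mat, folded frob2_eq_sum_quad_form]
    by (rule borel_measurable_integrable)
  have "(\<integral>H. dirichlet A C H / frob2 C H \<partial>Hlaw C S)
      \<le> 2 * prob {H \<in> space (Hlaw C S). frob2 C H < \<epsilon>} + (\<integral>H. dirichlet A C H \<partial>Hlaw C S) / \<epsilon>"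
    using dirichlet_nonneg[OF adj] dirichlet_le_frob2[OF adj] \<epsilon>
    by (intro integral_ratio_le[OF D(1) F]) simp_all
  also have "prob {H \<in> space (Hlaw C S). frob2 C H < \<epsilon>} \<le> 2 * sqrt \<epsilon> / sqrt (2 * pi * S i i)"
    by (rule Hlaw_frob2_small_ball[OF S C Sii_pos \<epsilon>])
  also have "\<dots> \<le> 2 * sqrt \<epsilon> / sqrt (2 * pi * (\<tau> / CARD('n)))"
  proof (rule frac_le)
    show "sqrt (2 * pi * (\<tau> / CARD('n))) \<le> sqrt (2 * pi * S i i)"
      using Sii by (intro real_sqrt_le_mono mult_left_mono) auto
  qed (use \<tau> \<epsilon> in simp_all)
  finally show ?thesis
    unfolding D(2) by simp
qed

lemma Hlaw_dirichlet_ratio_nonneg: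
  "is_adj A \<Longrightarrow> 0 \<le> (\<integral>H. dirichlet A C H / frob2 C H \<partial>Hlaw C S)"
  by (intro Bochner_Integration.integral_nonneg ratio_bounds(1)[OF dirichlet_nonneg dirichlet_le_frob2]) simp_all

section \<open>Behaviour in depth\<close>

lemma tendsto_zero_of_eps_bound:
  fixes g d :: "nat \<Rightarrow> real"
  assumes nonneg: "\<And>n. 0 \<le> g n" and K: "0 < K"
    and bound: "\<And>\<epsilon> n. 0 < \<epsilon> \<Longrightarrow> g n \<le> K * sqrt \<epsilon> + d n / \<epsilon>"
    and d: "d \<longlonglongrightarrow> 0"
  shows "g \<longlonglongrightarrow> 0"
proof (rule LIMSEQ_I)
  fix r :: real
  assume r: "0 < r"
  define \<epsilon> where "\<epsilon> = (r / (2 * K))\<^sup>2"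
  have \<epsilon>: "0 < \<epsilon>" and K\<epsilon>: "K * sqrt \<epsilon> = r / 2"
    using r K by (simp_all add: \<epsilon>_def)
  have "(\<lambda>n. d n / \<epsilon>) \<longlonglongrightarrow> 0"
    using tendsto_divide[OF d tendsto_const, of \<epsilon>] \<epsilon> by simp
  moreover have "0 < r / 2"
    using r by simp
  ultimately have "\<forall>\<^sub>F n in sequentially. d n / \<epsilon> < r / 2"
    by (rule order_tendstoD(2))
  then obtain N where N: "\<And>n. N \<le> n \<Longrightarrow> d n / \<epsilon> < r / 2"
    unfolding eventually_sequentially by blast
  have "norm (g n - 0) < r" if "N \<le> n" for n
  proof -
    have "g n < r"
      using bound[OF \<epsilon>, of n] N[OF that] K\<epsilon> by linarith
    then show ?thesis using nonneg[of n] by simp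
  qed
  then show "\<exists>N. \<forall>n\<ge>N. norm (g n - 0) < r"
    by blast
qed

lemma FSP_le_geometric:
  fixes A :: "'n::finite \<Rightarrow> 'n \<Rightarrow> real" and X :: "'n \<Rightarrow> 'd::finite \<Rightarrow> real"
  assumes adj: "is_adj A" and sw: "0 \<le> sw" and ab: "0 < a\<^sup>2 + b\<^sup>2" and X: "0 < frob2X X"
    and L: "1 \<le> L"
  shows "FSP (relu_ab a b) C A X L sw
       \<le> 2 * real C / ((a\<^sup>2 + b\<^sup>2) * real CARD('d)) * (sw * (a\<^sup>2 + b\<^sup>2) / 2) ^ L"
proof -
  define q where "q = sw * (a\<^sup>2 + b\<^sup>2) / 2"
  have q: "0 \<le> q" using sw ab by (simp add: q_def)
  have trace_le: "mtrace (cov (relu_ab a b) sw A X (Suc n)) \<le> sw / real CARD('d) * frob2X X * q ^ n" for n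
  proof (induction n)
    case 0
    then show ?case using trace_cov_one_le[OF adj sw] by simp
  next
    case (Suc n)
    have "mtrace (cov (relu_ab a b) sw A X (Suc (Suc n)))
        = mtrace (next_cov (relu_ab a b) sw A (cov (relu_ab a b) sw A X (Suc n)))"
      by (rule arg_cong[OF cov_Suc_Suc])
    also have "\<dots> \<le> sw * ((a\<^sup>2 + b\<^sup>2) / 2 * mtrace (cov (relu_ab a b) sw A X (Suc n)))"
      by (rule trace_next_cov_le[OF adj psd_cov[OF adj sw] sw])
    also have "\<dots> = q * mtrace (cov (relu_ab a b) sw A X (Suc n))"
      by (simp add: q_def)
    also have "\<dots> \<le> q * (sw / real CARD('d) * frob2X X * q ^ n)"
      using Suc q by (rule mult_left_mono)
    finally show ?case by (simp add: mult_ac)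
  qed
  obtain n where n: "L = Suc n" using L by (cases L) auto
  have "FSP (relu_ab a b) C A X L sw = real C * mtrace (cov (relu_ab a b) sw A X (Suc n)) / frob2X X"
    unfolding n by (rule FSP_eq_trace[OF psd_cov[OF adj sw]])
  also have "\<dots> \<le> real C * (sw / real CARD('d) * frob2X X * q ^ n) / frob2X X"
    using trace_le[of n] X by (intro divide_right_mono mult_left_mono) simp_all
  also have "\<dots> = (real C * sw / real CARD('d)) * q ^ n"
    using X by simp
  also have "real C * sw / real CARD('d) = 2 * real C / ((a\<^sup>2 + b\<^sup>2) * real CARD('d)) * q"
  proof -
    have "2 * real C / (s * real CARD('d)) * (sw * s / 2) = real C * sw / real CARD('d)" if "0 < s" for s
      using that by (simp add: field_simps)
    from this[OF ab] show ?thesis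
      unfolding q_def by (rule sym)
  qed
  also have "\<dots> * q ^ n = 2 * real C / ((a\<^sup>2 + b\<^sup>2) * real CARD('d)) * q ^ L"
    by (simp add: n)
  finally show ?thesis unfolding q_def .
qed

lemma GEV_le_trace_drop:
  fixes A :: "'n::finite \<Rightarrow> 'n \<Rightarrow> real" and X :: "'n \<Rightarrow> 'd::finite \<Rightarrow> real"
  assumes adj: "is_adj A" and sw: "0 \<le> sw" and C: "0 < C"
    and \<tau>: "0 < \<tau>" "\<tau> \<le> mtrace (cov (relu_ab a b) sw A X (Suc (Suc n)))" and \<epsilon>: "0 < \<epsilon>"
  shows "GEV (relu_ab a b) C A X (Suc (Suc n)) sw
       \<le> 4 * sqrt \<epsilon> / sqrt (2 * pi * (\<tau> / CARD('n)))
         + real C * (smoothing_const A * (sw * ((a\<^sup>2 + b\<^sup>2) / 2 * mtrace (cov (relu_ab a b) sw A X (Suc n)))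
                       - mtrace (cov (relu_ab a b) sw A X (Suc (Suc n))))) / \<epsilon>"
proof -
  let ?S = "cov (relu_ab a b) sw A X (Suc (Suc n))"
  have "frob_inner (L_hat A) ?S
      \<le> smoothing_const A * (sw * ((a\<^sup>2 + b\<^sup>2) / 2 * mtrace (cov (relu_ab a b) sw A X (Suc n))) - mtrace ?S)"
    unfolding cov_Suc_Suc by (rule dirichlet_next_cov_le[OF adj psd_cov[OF adj sw] sw])
  then have "real C * frob_inner (L_hat A) ?S / \<epsilon>
      \<le> real C * (smoothing_const A * (sw * ((a\<^sup>2 + b\<^sup>2) / 2 * mtrace (cov (relu_ab a b) sw A X (Suc n)))
                                       - mtrace ?S)) / \<epsilon>"
    using \<epsilon> by (intro divide_right_mono mult_left_mono) simp_all
  moreover have "GEV (relu_ab a b) C A X (Suc (Suc n)) sw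
      \<le> 4 * sqrt \<epsilon> / sqrt (2 * pi * (\<tau> / CARD('n))) + real C * frob_inner (L_hat A) ?S / \<epsilon>"
    unfolding GEV_def by (rule Hlaw_dirichlet_ratio_le[OF adj psd_cov[OF adj sw] C \<tau> \<epsilon>])
  ultimately show ?thesis
    by linarith
qed

lemma critical_GEV_or_FSP_tendsto_zero:
  fixes A :: "'n::finite \<Rightarrow> 'n \<Rightarrow> real" and X :: "'n \<Rightarrow> 'd::finite \<Rightarrow> real"
  assumes adj: "is_adj A" and ab: "0 < a\<^sup>2 + b\<^sup>2" and crit: "sw = 2 / (a\<^sup>2 + b\<^sup>2)"
    and X: "0 < frob2X X" and C: "1 \<le> C"
  shows "(\<lambda>L. GEV (relu_ab a b) C A X L sw) \<longlonglongrightarrow> 0 \<or> (\<lambda>L. FSP (relu_ab a b) C A X L sw) \<longlonglongrightarrow> 0"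
proof -
  define t where "t n = mtrace (cov (relu_ab a b) sw A X (Suc n))" for n
  have sw: "0 \<le> sw" using crit ab by simp
  have C_pos: "0 < C" using C by simp
  note psd = psd_cov[OF adj sw, of a b X]
  have gain: "sw * ((a\<^sup>2 + b\<^sup>2) / 2 * x) = x" for x
    using crit ab by auto
  have "t (Suc n) \<le> t n" for n
    using trace_next_cov_le[OF adj psd sw, where a=a and b=b]
    unfolding t_def cov_Suc_Suc gain .
  then obtain \<tau> where t: "t \<longlonglongrightarrow> \<tau>" and \<tau>: "\<And>n. \<tau> \<le> t n"
    using decseq_convergent[of t 0] mtrace_nonneg[OF psd] unfolding decseq_Suc_iff t_def by blast
  show ?thesis
  proof (cases "\<tau> = 0")
    case True
    have "(\<lambda>n. real C * t n / frob2X X) \<longlonglongrightarrow> real C * 0 / frob2X X"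
      using t True X by (intro tendsto_intros) simp_all
    then have "(\<lambda>n. FSP (relu_ab a b) C A X (Suc n) sw) \<longlonglongrightarrow> 0"
      by (simp add: FSP_eq_trace[OF psd] t_def)
    from LIMSEQ_imp_Suc[OF this] show ?thesis ..
  next
    case False
    then have \<tau>_pos: "0 < \<tau>"
      using tendsto_lowerbound[OF t always_eventually] mtrace_nonneg[OF psd] by (force simp: t_def)
    define K where "K = 4 / sqrt (2 * pi * (\<tau> / CARD('n)))"
    define d where "d n = real C * (smoothing_const A * (t n - t (Suc n)))" for n
    have bound: "GEV (relu_ab a b) C A X (Suc (Suc n)) sw \<le> K * sqrt \<epsilon> + d n / \<epsilon>" if "0 < \<epsilon>" for \<epsilon> n
      using GEV_le_trace_drop[OF adj sw C_pos \<tau>_pos \<tau>[of "Suc n", unfolded t_def] that]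
      unfolding gain t_def[symmetric] by (simp add: K_def d_def)
    have "d \<longlonglongrightarrow> real C * (smoothing_const A * (\<tau> - \<tau>))"
      unfolding d_def by (intro tendsto_intros t LIMSEQ_Suc[OF t])
    then have d: "d \<longlonglongrightarrow> 0"
      by simp
    have K: "0 < K"
      using \<tau>_pos by (simp add: K_def)
    have nonneg: "0 \<le> GEV (relu_ab a b) C A X (Suc (Suc n)) sw" for n
      unfolding GEV_def by (rule Hlaw_dirichlet_ratio_nonneg[OF adj])
    have "(\<lambda>n. GEV (relu_ab a b) C A X (Suc (Suc n)) sw) \<longlonglongrightarrow> 0"
      using nonneg K bound d by (rule tendsto_zero_of_eps_bound)
    then have "(\<lambda>n. GEV (relu_ab a b) C A X (Suc n) sw) \<longlonglongrightarrow> 0"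
      by (rule LIMSEQ_imp_Suc[where f="\<lambda>n. GEV (relu_ab a b) C A X (Suc n) sw"])
    from LIMSEQ_imp_Suc[OF this] show ?thesis ..
  qed
qed

theorem mainTheorem2:
  fixes \<alpha> \<beta> sw :: real and C :: nat
    and A :: "'n::finite \<Rightarrow> 'n \<Rightarrow> real" and X :: "'n \<Rightarrow> 'd::finite \<Rightarrow> real"
  assumes "\<alpha> \<ge> 0" and "\<beta> \<ge> 0" and "\<not> (\<alpha> = 0 \<and> \<beta> = 0)"
    and "is_adj A"
    and "\<exists>i k. X i k \<noteq> 0"
    and "C \<ge> 1"
    and "sw > 0"
  shows "(sw = 2 / (\<alpha>\<^sup>2 + \<beta>\<^sup>2) \<longrightarrow>
            ((\<lambda>L. GEV (relu_ab \<alpha> \<beta>) C A X L sw) \<longlonglongrightarrow> 0) \<or>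
            ((\<lambda>L. FSP (relu_ab \<alpha> \<beta>) C A X L sw) \<longlonglongrightarrow> 0))
       \<and> (sw < 2 / (\<alpha>\<^sup>2 + \<beta>\<^sup>2) \<longrightarrow>
            (\<forall>L\<ge>1. FSP (relu_ab \<alpha> \<beta>) C A X L sw
               \<le> 2 * real C / ((\<alpha>\<^sup>2 + \<beta>\<^sup>2) * real CARD('d)) * (sw * (\<alpha>\<^sup>2 + \<beta>\<^sup>2) / 2) ^ L))"
proof -
  have ab: "0 < \<alpha>\<^sup>2 + \<beta>\<^sup>2"
    using assms(3) by (cases "\<alpha> = 0") (simp_all add: add_pos_nonneg)
  obtain i k where "X i k \<noteq> 0"
    using assms(5) by blast
  then have X: "0 < frob2X X"
    unfolding frob2X_def
    by (intro sum_pos2[of UNIV i] sum_pos2[of UNIV k] sum_nonneg) simp_all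
  show ?thesis
    using critical_GEV_or_FSP_tendsto_zero[OF assms(4) ab _ X assms(6)]
      FSP_le_geometric[OF assms(4) _ ab X] assms(7)
    by simp
qed

end
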